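(* Let $p \in (0,1)$. Define $\{X_i\}_{i\ge1}$ by: $X_1 = 1$ with probability one, and for each $n \ge 1$, with $U_n$ uniform on $\{1,\dots,n\}$ (independent of everything else), $X_{n+1} = X_{U_n}$ with probability $p$ and $X_{n+1}=0$ with probability $1-p$ (all choices independent). Let $H_n := \sum_{i=1}^n X_i$, $\mathcal{F}_n := \sigma(X_1,\dots,X_n)$, $a_0 := 1$, $a_n := \prod_{k=1}^{n-1}(1 + p/k) = \frac{\Gamma(n+p)}{\Gamma(n)\Gamma(1+p)}$ for $n \ge 1$, and $\widehat{M}_n := H_n/a_n$, a nonnegative martingale with a.s. limit $\widehat{W} := \lim_{n\to\infty} \widehat{M}_n$. Then for every $k = 1,2,\dots$, $$\lim_{n\to\infty} E\left[\left(\frac{H_n}{n^p}\right)^k\right] = \frac{k!}{\Gamma(1+kp)}.$$ Consequently the martingale $\{\widehat{M}_n\}$ is $L^k$-bounded for every $k$, and the almost sure limit $$\mathcal{W} := \lim_{n\to\infty} \frac{H_n}{n^p} = \frac{\widehat{W}}{\Gamma(1+p)}$$ has the Mittag--Leffler distribution with parameter $p$. In particular $P(\mathcal{W} > 0) = 1$.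
   Context: A random variable $X$ is Mittag--Leffler distributed with parameter $p\in[0,1]$ if $E[e^{\lambda X}] = \sum_{k=0}^\infty \frac{\lambda^k}{\Gamma(1+kp)}$ for all $\lambda\in\mathbb{R}$; equivalently its $k$-th moment is $k!/\Gamma(1+kp)$ for every $k$, and this distribution is determined by its moments. *)

theory Defs
  imports "HOL-Probability.Probability"
begin

text \<open>Law of the list [X_1, ..., X_n] of the process (list index i holds X_(i+1)).\<close>
fun proc_pmf :: "real \<Rightarrow> nat \<Rightarrow> nat list pmf" where
  "proc_pmf p 0 = return_pmf []"
| "proc_pmf p (Suc 0) = return_pmf [1]"
| "proc_pmf p (Suc (Suc n)) =
     bind_pmf (proc_pmf p (Suc n)) (\<lambda>xs.
     bind_pmf (pmf_of_set {..<Suc n}) (\<lambda>u.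
     bind_pmf (bernoulli_pmf p) (\<lambda>b.
     return_pmf (xs @ [if b then xs ! u else 0]))))"

definition a_seq :: "real \<Rightarrow> nat \<Rightarrow> real" where
  "a_seq p n = (\<Prod>k=1..<n. 1 + p / real k)"

definition mittag_leffler_distributed :: "'a measure \<Rightarrow> real \<Rightarrow> ('a \<Rightarrow> real) \<Rightarrow> bool" where
  "mittag_leffler_distributed M p W \<longleftrightarrow>
     W \<in> borel_measurable M \<and>
     (\<forall>l::real. integrable M (\<lambda>\<omega>. exp (l * W \<omega>)) \<and>
        (\<lambda>k. l ^ k / Gamma (1 + real k * p)) sums (integral\<^sup>L M (\<lambda>\<omega>. exp (l * W \<omega>))))"

end

theory Submission
  imports Defs "HOL-Real_Asymp.Real_Asymp"
begin

text \<open>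
  If the first \<open>n\<close> entries sum to \<open>S\<close>, the next one is \<open>1\<close> with probability \<open>p S / n\<close>. Hence
  for every real \<open>x\<close> the products \<open>a_x(S) = \<Prod>_{j<S} (1 + x / j)\<close> (\<open>a_seq x S\<close>) satisfy the exact
  identity \<open>E a_x(H_n) = a_{p x}(n)\<close>. Taking \<open>x = k\<close> gives the factorial moments
  \<open>E (H_n)_k = k! a_{k p}(n)\<close>, and \<open>a_{k p}(n) \<sim> n^{k p} / \<Gamma>(1 + k p)\<close> by Gauss' product formula;
  this yields the moment limits and the bound \<open>E (H_n / a_p(n))^k \<le> k!\<close>.

  Almost sure convergence of \<open>H_n / a_p(n)\<close> follows from the explicit second moments: along
  \<open>N_j = (j + 1)^q\<close> with \<open>q p \<ge> 6\<close> the increments are small enough for Chebyshev and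
  Borel--Cantelli, and monotonicity of \<open>H\<close> and \<open>a_p\<close> fills the gaps. The moment bounds give uniform
  integrability, so the limit \<open>W\<close> has moments \<open>k! / \<Gamma>(1 + k p)\<close>; these grow slowly enough to
  integrate the exponential series termwise, which identifies the Mittag-Leffler law.

  Finally \<open>x = -1/2\<close> gives \<open>E (n^{p/2} a_{-1/2}(H_n)) = n^{p/2} a_{-p/2}(n) = O(1)\<close>, while
  \<open>n^{p/2} a_{-1/2}(H_n)\<close> is comparable to \<open>(H_n / n^p)^{-1/2}\<close>, which tends to infinity wherever
  \<open>W = 0\<close>; by Fatou's lemma \<open>W > 0\<close> almost surely.
\<close>

section \<open>The products \<open>a_seq\<close>\<close>

lemma a_seq_0 [simp]: "a_seq x 0 = 1" and a_seq_Suc_0 [simp]: "a_seq x (Suc 0) = 1"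
  by (simp_all add: a_seq_def)

lemma a_seq_Suc: "1 \<le> n \<Longrightarrow> a_seq x (Suc n) = a_seq x n * (1 + x / real n)"
  by (simp add: a_seq_def prod.atLeastLessThan_Suc)

lemma a_seq_Suc_diff: "1 \<le> n \<Longrightarrow> real n * (a_seq x (Suc n) - a_seq x n) = x * a_seq x n"
  by (simp add: a_seq_Suc field_simps)

lemma a_seq_pos: "-1 < x \<Longrightarrow> 0 < a_seq x n"
  unfolding a_seq_def by (intro prod_pos) (auto simp: field_simps)

lemma a_seq_mono:
  assumes "0 \<le> x" "n \<le> m"
  shows "a_seq x n \<le> a_seq x m"
  using assms(2)
proof (induction m rule: dec_induct)
  case (step m)
  show ?case
  proof (cases "m = 0")
    case False
    have "a_seq x m \<le> a_seq x m * (1 + x / real m)"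
      using a_seq_pos[of x m] assms(1) by (intro mult_le_cancel_left1[THEN iffD2]) auto
    then show ?thesis using step.IH False by (simp add: a_seq_Suc)
  qed (use step.IH in simp)
qed simp

lemma a_seq_Suc_mult_fact: "a_seq x (Suc n) * fact n = pochhammer (x + 1) n"
proof (induction n)
  case (Suc n)
  have "a_seq x (Suc (Suc n)) * fact (Suc n) = (a_seq x (Suc n) * fact n) * (1 + x / real (Suc n)) * real (Suc n)"
    by (simp add: a_seq_Suc del: of_nat_Suc)
  also have "\<dots> = pochhammer (x + 1) n * (x + 1 + real n)"
    unfolding Suc by (simp add: field_simps)
  finally show ?case
    by (simp add: pochhammer_rec' mult.commute)
qed simp

lemma pochhammer_of_nat_eq_fact_mult_a_seq:
  "1 \<le> S \<Longrightarrow> pochhammer (real S) k = fact k * a_seq (real k) S"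
proof (induction S rule: dec_induct)
  case base
  then show ?case by (simp add: pochhammer_fact)
next
  case (step S)
  have "real S * pochhammer (real S + 1) k = (real S + real k) * pochhammer (real S) k"
    using pochhammer_rec[of "real S" k] pochhammer_rec'[of "real S" k] by simp
  with step show ?case
    by (simp add: a_seq_Suc field_simps)
qed

text \<open>Since \<open>a_seq x (n + 1) * n! = (x + 1)\<^sub>n\<close>, this is Gauss' product formula for \<open>1 / \<Gamma>(1 + x)\<close>.\<close>
lemma a_seq_asymptotics:
  assumes "-1 < x"
  shows "(\<lambda>n. a_seq x n / real n powr x) \<longlonglongrightarrow> 1 / Gamma (1 + x)"
proof -
  have "rGamma_series (x + 1) n * (real n powr (x + 1) / ((real n + x + 1) * real (Suc n) powr x))
      = a_seq x (Suc n) / real (Suc n) powr x" if "1 \<le> n" for n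
  proof -
    have "exp ((x + 1) * ln (real n)) = real n powr (x + 1)"
      using that by (simp add: powr_def mult.commute)
    moreover have "pochhammer (x + 1) (Suc n) = a_seq x (Suc n) * fact n * (real n + x + 1)"
      by (simp only: pochhammer_rec' a_seq_Suc_mult_fact) (simp add: algebra_simps)
    ultimately have rGamma: "rGamma_series (x + 1) n = a_seq x (Suc n) * (real n + x + 1) / real n powr (x + 1)"
      unfolding rGamma_series_def by simp
    have cancel: "c \<noteq> 0 \<Longrightarrow> P \<noteq> 0 \<Longrightarrow> a * c / P * (P / (c * Q)) = a / Q" for a c P Q :: real
      by (simp add: field_simps)
    show ?thesis
      unfolding rGamma using that assms by (intro cancel) auto
  qed
  then have "\<forall>\<^sub>F n in sequentially. rGamma_series (x + 1) n *
      (real n powr (x + 1) / ((real n + x + 1) * real (Suc n) powr x)) = a_seq x (Suc n) / real (Suc n) powr x"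
    by (simp add: eventually_at_top_linorder) blast
  moreover have "(\<lambda>n. rGamma_series (x + 1) n *
      (real n powr (x + 1) / ((real n + x + 1) * real (Suc n) powr x))) \<longlonglongrightarrow> rGamma (x + 1) * 1"
    by (intro tendsto_intros) real_asymp
  ultimately have "(\<lambda>n. a_seq x (Suc n) / real (Suc n) powr x) \<longlonglongrightarrow> 1 / Gamma (1 + x)"
    by (simp add: Lim_transform_eventually rGamma_inverse_Gamma divide_inverse add.commute)
  then show ?thesis
    by (rule LIMSEQ_imp_Suc)
qed

lemma a_seq_comparable_powr:
  assumes "-1 < x"
  obtains c C where "0 < c" "\<And>n. 1 \<le> n \<Longrightarrow> c * real n powr x \<le> a_seq x n"
    "\<And>n. 1 \<le> n \<Longrightarrow> a_seq x n \<le> C * real n powr x"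
proof -
  define f where "f n = a_seq x n / real n powr x" for n
  have lim: "f \<longlonglongrightarrow> 1 / Gamma (1 + x)"
    unfolding f_def using assms by (rule a_seq_asymptotics)
  have "0 < Gamma (1 + x)"
    using assms by simp
  then have "(\<lambda>n. inverse (f n)) \<longlonglongrightarrow> inverse (1 / Gamma (1 + x))"
    by (intro tendsto_inverse lim) simp
  then obtain D where "0 < D" and D: "\<And>n. norm (inverse (f n)) \<le> D"
    using convergent_imp_Bseq[THEN BseqE] unfolding convergent_def by metis
  obtain C where C: "\<And>n. norm (f n) \<le> C"
    using lim convergent_imp_Bseq[THEN BseqE] unfolding convergent_def by metis
  show ?thesis
  proof
    show "0 < 1 / D"
      using \<open>0 < D\<close> by simp
    fix n :: nat
    assume "1 \<le> n"
    then have pos: "0 < real n powr x" "0 < a_seq x n"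
      using a_seq_pos assms by auto
    then have "inverse (f n) \<le> D" "f n \<le> C"
      using C[of n] D[of n] by (auto simp: f_def)
    with pos \<open>0 < D\<close> show "1 / D * real n powr x \<le> a_seq x n" "a_seq x n \<le> C * real n powr x"
      by (auto simp: f_def field_simps)
  qed
qed

lemma a_seq_ratio_tendsto_1:
  assumes "-1 < x" and N: "filterlim N at_top sequentially"
    and ratio: "(\<lambda>j. real (N (Suc j)) / real (N j)) \<longlonglongrightarrow> 1"
  shows "(\<lambda>j. a_seq x (N (Suc j)) / a_seq x (N j)) \<longlonglongrightarrow> 1"
proof -
  define c where "c n = a_seq x n / real n powr x" for n
  define C where "C = 1 / Gamma (1 + x)"
  have "0 < Gamma (1 + x)"
    using assms(1) by simp
  then have "C \<noteq> 0"
    by (simp add: C_def)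
  have "c \<longlonglongrightarrow> C"
    unfolding c_def C_def using assms(1) by (rule a_seq_asymptotics)
  then have cN: "(\<lambda>j. c (N j)) \<longlonglongrightarrow> C"
    using N by (rule filterlim_compose)
  have "(\<lambda>j. c (N (Suc j)) / c (N j) * (real (N (Suc j)) / real (N j)) powr x) \<longlonglongrightarrow> C / C * 1 powr x"
    by (intro tendsto_intros LIMSEQ_Suc[OF cN] cN ratio \<open>C \<noteq> 0\<close>) simp
  moreover have "\<forall>\<^sub>F j in sequentially. 1 \<le> N j"
    using N by (simp add: filterlim_at_top)
  then have "\<forall>\<^sub>F j in sequentially. 1 \<le> N j \<and> 1 \<le> N (Suc j)"
    using eventually_sequentially_Suc[of "\<lambda>j. 1 \<le> N j"] by (auto intro: eventually_conj)
  then have "\<forall>\<^sub>F j in sequentially. c (N (Suc j)) / c (N j) * (real (N (Suc j)) / real (N j)) powr x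
      = a_seq x (N (Suc j)) / a_seq x (N j)"
    by eventually_elim (use a_seq_pos[OF assms(1)] in \<open>simp add: c_def powr_divide field_simps\<close>)
  ultimately show ?thesis
    using \<open>C \<noteq> 0\<close> by (simp add: Lim_transform_eventually)
qed

lemma a_seq_mult_le_power:
  assumes "0 \<le> x"
  shows "a_seq (real k * x) n \<le> a_seq x n ^ k"
  unfolding a_seq_def prod_power_distrib
proof (intro prod_mono conjI)
  fix j assume "j \<in> {1..<n}"
  have "1 + real k * (x / real j) \<le> (1 + x / real j) ^ k"
  proof (rule Bernoulli_inequality)
    show "-1 \<le> x / real j"
      using assms by (simp add: order_trans[of _ 0])
  qed
  then show "1 + real k * x / real j \<le> (1 + x / real j) ^ k"
    by simp
qed (use assms in simp)

lemma powr_le_a_seq: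
  assumes "0 \<le> x" "x \<le> 1" "1 \<le> n"
  shows "real n powr x \<le> a_seq x n"
  using assms(3)
proof (induction n rule: dec_induct)
  case (step n)
  have "0 < 1 + 1 / real n"
    by (simp add: add_pos_nonneg)
  then have "(1 + 1 / real n) powr x \<le> 1 + x / real n"
    using Youngs_inequality_0[of x "1 - x" "1 + 1 / real n" 1] assms by (simp add: algebra_simps)
  moreover have "real (Suc n) = real n * (1 + 1 / real n)"
    using step.hyps by (simp add: field_simps)
  ultimately have "real (Suc n) powr x \<le> real n powr x * (1 + x / real n)"
    by (simp add: powr_mult mult_left_mono del: of_nat_Suc)
  also have "\<dots> \<le> a_seq x n * (1 + x / real n)"
    using step.IH assms by (intro mult_right_mono) auto
  finally show ?case
    using step.hyps by (simp add: a_seq_Suc)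
qed simp

section \<open>Exact moments of the process\<close>

definition binary_lists :: "nat \<Rightarrow> nat list set" where
  "binary_lists n = {xs. length xs = n \<and> set xs \<subseteq> {0, 1}}"

lemma finite_binary_lists: "finite (binary_lists n)"
  unfolding binary_lists_def using finite_lists_length_eq[of "{0::nat, 1}" n]
  by (simp add: conj_commute)

lemma set_pmf_proc_pmf: "set_pmf (proc_pmf p n) \<subseteq> binary_lists n"
proof (induction p n rule: proc_pmf.induct)
  case (3 p n)
  show ?case
  proof
    fix ys assume "ys \<in> set_pmf (proc_pmf p (Suc (Suc n)))"
    moreover have "set_pmf (pmf_of_set {..<Suc n}) = {..<Suc n}"
      by (rule set_pmf_of_set) auto
    ultimately obtain xs u b where xs: "xs \<in> set_pmf (proc_pmf p (Suc n))" and "u < Suc n"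
      and ys: "ys = xs @ [if b then xs ! u else 0]"
      by auto
    with 3 have "xs \<in> binary_lists (Suc n)" "xs ! u \<in> set xs"
      by (auto simp: binary_lists_def)
    with ys show "ys \<in> binary_lists (Suc (Suc n))"
      by (auto simp: binary_lists_def)
  qed
qed (simp_all add: binary_lists_def)

lemma sum_list_proc_pmf_ge_1: "xs \<in> set_pmf (proc_pmf p n) \<Longrightarrow> 1 \<le> n \<Longrightarrow> 1 \<le> sum_list xs"
proof (induction p n arbitrary: xs rule: proc_pmf.induct)
  case (3 p n)
  then obtain ys y where "ys \<in> set_pmf (proc_pmf p (Suc n))" "xs = ys @ [y]"
    by auto
  with 3 show ?case by fastforce
qed auto

abbreviation proc_expectation :: "real \<Rightarrow> nat \<Rightarrow> (nat list \<Rightarrow> real) \<Rightarrow> real" where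
  "proc_expectation p n F \<equiv> measure_pmf.expectation (proc_pmf p n) F"

lemma integrable_proc_pmf: "integrable (measure_pmf (proc_pmf p n)) (F :: nat list \<Rightarrow> real)"
  using finite_subset[OF set_pmf_proc_pmf finite_binary_lists]
  by (rule integrable_measure_pmf_finite)

lemma proc_expectation_cong:
  "(\<And>xs. xs \<in> set_pmf (proc_pmf p n) \<Longrightarrow> F xs = G xs) \<Longrightarrow>
    proc_expectation p n F = proc_expectation p n G"
  by (intro integral_cong_AE) (auto simp: AE_measure_pmf_iff)

lemma proc_expectation_Suc:
  assumes "0 \<le> p" "p \<le> 1"
  shows "proc_expectation p (Suc (Suc n)) F = proc_expectation p (Suc n)
     (\<lambda>xs. (\<Sum>u<Suc n. p * F (xs @ [xs ! u]) + (1 - p) * F (xs @ [0])) / real (Suc n))"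
proof -
  let ?step = "\<lambda>xs. pmf_of_set {..<Suc n} \<bind>
    (\<lambda>u. bernoulli_pmf p \<bind> (\<lambda>b. return_pmf (xs @ [if b then xs ! u else 0])))"
  have coin: "measure_pmf.expectation (bernoulli_pmf p \<bind> (\<lambda>b.
      return_pmf (xs @ [if b then xs ! u else 0]))) F = p * F (xs @ [xs ! u]) + (1 - p) * F (xs @ [0])"
    for xs u
    using assms by (simp add: map_pmf_def[symmetric] integral_map_pmf o_def)
  have step: "measure_pmf.expectation (?step xs) F
     = (\<Sum>u<Suc n. p * F (xs @ [xs ! u]) + (1 - p) * F (xs @ [0])) / real (Suc n)" for xs
    unfolding sum_divide_distrib
    by (subst pmf_expectation_bind_pmf_of_set)
      (simp_all add: coin scaleR_conv_of_real divide_inverse mult.commute lessThan_empty_iff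
        del: sum.lessThan_Suc lessThan_Suc)
  have "set_pmf (pmf_of_set {..<Suc n}) = {..<Suc n}"
    by (rule set_pmf_of_set) auto
  then have "set_pmf (?step xs) \<subseteq> (\<lambda>(u, b). xs @ [if b then xs ! u else 0]) ` ({..<Suc n} \<times> UNIV)"
    for xs by auto
  then have "finite (set_pmf (?step xs))" for xs
    by (rule finite_subset) auto
  then have "proc_expectation p (Suc (Suc n)) F =
      (\<Sum>xs\<in>binary_lists (Suc n). pmf (proc_pmf p (Suc n)) xs * measure_pmf.expectation (?step xs) F)"
    by (simp only: proc_pmf.simps, subst pmf_expectation_bind[OF finite_binary_lists _ set_pmf_proc_pmf])
      auto
  also have "\<dots> = proc_expectation p (Suc n) (\<lambda>xs. measure_pmf.expectation (?step xs) F)"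
    by (subst integral_measure_pmf[OF finite_binary_lists]) (use set_pmf_proc_pmf in auto)
  finally show ?thesis
    unfolding step .
qed

lemma sum_nth_binary:
  assumes "set xs \<subseteq> {0, 1}"
  shows "(\<Sum>u<length xs. h (xs ! u)) = real (length xs - sum_list xs) * h 0 + real (sum_list xs) * (h 1 :: real)"
    and "sum_list xs \<le> length xs"
  using assms
proof (induction xs rule: rev_induct)
  case (snoc x xs)
  { case 1 with snoc show ?case by (auto simp: nth_append algebra_simps of_nat_diff) }
  { case 2 with snoc show ?case by auto }
qed auto

lemma proc_expectation_Suc_sum_list:
  assumes "0 \<le> p" "p \<le> 1"
    and psi: "\<And>xs y. length xs = Suc n \<Longrightarrow> psi (xs @ [y]) = psi xs"
  shows "proc_expectation p (Suc (Suc n)) (\<lambda>xs. phi (sum_list xs) * psi xs) = proc_expectation p (Suc n)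
     (\<lambda>xs. (phi (sum_list xs) + p * real (sum_list xs) / real (Suc n) *
              (phi (Suc (sum_list xs)) - phi (sum_list xs))) * psi xs)"
  unfolding proc_expectation_Suc[OF assms(1,2)]
proof (rule proc_expectation_cong)
  fix xs assume "xs \<in> set_pmf (proc_pmf p (Suc n))"
  then have xs: "length xs = Suc n" "set xs \<subseteq> {0, 1}"
    using set_pmf_proc_pmf unfolding binary_lists_def by blast+
  define S where "S = sum_list xs"
  have "S \<le> Suc n"
    using sum_nth_binary(2)[OF xs(2)] xs(1) S_def by simp
  have "(\<Sum>u<Suc n. p * (phi (sum_list (xs @ [xs ! u])) * psi (xs @ [xs ! u]))
       + (1 - p) * (phi (sum_list (xs @ [0])) * psi (xs @ [0])))
     = (\<Sum>u<length xs. (\<lambda>y. p * phi (S + y) * psi xs + (1 - p) * phi S * psi xs) (xs ! u))"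
    using xs by (simp add: psi S_def mult.assoc)
  also have "\<dots> = real (Suc n - S) * (p * phi S * psi xs + (1 - p) * phi S * psi xs)
       + real S * (p * phi (Suc S) * psi xs + (1 - p) * phi S * psi xs)"
    by (subst sum_nth_binary(1)[OF xs(2)]) (simp add: S_def xs(1))
  finally show "(\<Sum>u<Suc n. p * (phi (sum_list (xs @ [xs ! u])) * psi (xs @ [xs ! u]))
       + (1 - p) * (phi (sum_list (xs @ [0])) * psi (xs @ [0]))) / real (Suc n) =
      (phi (sum_list xs) + p * real (sum_list xs) / real (Suc n) *
            (phi (Suc (sum_list xs)) - phi (sum_list xs))) * psi xs"
    using \<open>S \<le> Suc n\<close> unfolding S_def[symmetric] by (simp add: of_nat_diff field_simps)
qed

text \<open>By \<open>a_seq_Suc_diff\<close>, each step multiplies the expectation by \<open>1 + p x / m\<close>.\<close>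
lemma proc_expectation_a_seq_sum_list:
  assumes "0 \<le> p" "p \<le> 1" "1 \<le> n"
  shows "proc_expectation p n (\<lambda>xs. a_seq x (sum_list xs)) = a_seq (p * x) n"
  using assms(3)
proof (induction n rule: dec_induct)
  case base
  then show ?case by simp
next
  case (step m)
  then obtain m' where m: "m = Suc m'"
    by (cases m) auto
  have "proc_expectation p (Suc m) (\<lambda>xs. a_seq x (sum_list xs) * 1) =
      proc_expectation p m (\<lambda>xs. (a_seq x (sum_list xs) + p * real (sum_list xs) / real m *
        (a_seq x (Suc (sum_list xs)) - a_seq x (sum_list xs))) * 1)"
    unfolding m by (rule proc_expectation_Suc_sum_list[OF assms(1,2)]) simp
  also have "\<dots> = proc_expectation p m (\<lambda>xs. (1 + p * x / real m) * a_seq x (sum_list xs))"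
  proof (rule proc_expectation_cong)
    fix xs assume "xs \<in> set_pmf (proc_pmf p m)"
    then have "1 \<le> sum_list xs"
      using sum_list_proc_pmf_ge_1 step.hyps by blast
    from a_seq_Suc_diff[OF this, of x] show "(a_seq x (sum_list xs) + p * real (sum_list xs) / real m *
        (a_seq x (Suc (sum_list xs)) - a_seq x (sum_list xs))) * 1 =
        (1 + p * x / real m) * a_seq x (sum_list xs)"
      by (simp add: field_simps)
  qed
  also have "\<dots> = a_seq (p * x) (Suc m)"
    using step by (simp add: a_seq_Suc)
  finally show ?case
    by simp
qed

lemma proc_expectation_pochhammer_sum_list:
  assumes "0 \<le> p" "p \<le> 1" "1 \<le> n"
  shows "proc_expectation p n (\<lambda>xs. pochhammer (real (sum_list xs)) k) = fact k * a_seq (real k * p) n"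
proof -
  have "proc_expectation p n (\<lambda>xs. pochhammer (real (sum_list xs)) k) =
      proc_expectation p n (\<lambda>xs. fact k * a_seq (real k) (sum_list xs))"
    using sum_list_proc_pmf_ge_1 assms(3)
    by (intro proc_expectation_cong pochhammer_of_nat_eq_fact_mult_a_seq) auto
  then show ?thesis
    using proc_expectation_a_seq_sum_list[OF assms] by (simp add: mult.commute)
qed

lemma proc_expectation_sum_list:
  assumes "0 \<le> p" "p \<le> 1" "1 \<le> n"
  shows "proc_expectation p n (\<lambda>xs. real (sum_list xs)) = a_seq p n"
  using proc_expectation_pochhammer_sum_list[OF assms, of 1] by simp

lemma proc_expectation_sum_list_mult_take:
  assumes "0 \<le> p" "p \<le> 1" "1 \<le> n" "n \<le> m"
  shows "proc_expectation p m (\<lambda>xs. real (sum_list xs) * real (sum_list (take n xs)))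
       = a_seq p m / a_seq p n * proc_expectation p n (\<lambda>xs. real (sum_list xs) ^ 2)"
  using assms(4)
proof (induction m rule: dec_induct)
  case base
  have "proc_expectation p n (\<lambda>xs. real (sum_list xs) * real (sum_list (take n xs))) =
      proc_expectation p n (\<lambda>xs. real (sum_list xs) ^ 2)"
  proof (rule proc_expectation_cong)
    fix xs assume "xs \<in> set_pmf (proc_pmf p n)"
    then have "length xs = n"
      using set_pmf_proc_pmf unfolding binary_lists_def by blast
    then show "real (sum_list xs) * real (sum_list (take n xs)) = real (sum_list xs) ^ 2"
      by (simp add: power2_eq_square)
  qed
  then show ?case
    using a_seq_pos[of p n] assms(1) by simp
next
  case (step m)
  then obtain m' where m: "m = Suc m'"
    using assms(3) by (cases m) auto
  have "proc_expectation p (Suc m) (\<lambda>xs. real (sum_list xs) * real (sum_list (take n xs)))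
    = proc_expectation p m (\<lambda>xs. (real (sum_list xs) + p * real (sum_list xs) / real m *
        (real (Suc (sum_list xs)) - real (sum_list xs))) * real (sum_list (take n xs)))"
    unfolding m by (rule proc_expectation_Suc_sum_list[OF assms(1,2)]) (use step.hyps m in auto)
  also have "\<dots> = proc_expectation p m
      (\<lambda>xs. (1 + p / real m) * (real (sum_list xs) * real (sum_list (take n xs))))"
    by (simp add: algebra_simps)
  also have "\<dots> = (1 + p / real m) *
      proc_expectation p m (\<lambda>xs. real (sum_list xs) * real (sum_list (take n xs)))"
    by (rule integral_mult_right_zero)
  also have "\<dots> = a_seq p (Suc m) / a_seq p n * proc_expectation p n (\<lambda>xs. real (sum_list xs) ^ 2)"
    using step assms by (simp add: a_seq_Suc)
  finally show ?case .
qed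

lemma proc_expectation_sum_list_squared_Suc:
  assumes "0 \<le> p" "p \<le> 1" "1 \<le> m"
  shows "proc_expectation p (Suc m) (\<lambda>xs. real (sum_list xs) ^ 2)
     = (1 + 2 * p / real m) * proc_expectation p m (\<lambda>xs. real (sum_list xs) ^ 2) + p / real m * a_seq p m"
proof -
  obtain m' where m: "m = Suc m'"
    using assms(3) by (cases m) auto
  have "proc_expectation p (Suc m) (\<lambda>xs. real (sum_list xs) ^ 2 * 1) =
      proc_expectation p m (\<lambda>xs. (real (sum_list xs) ^ 2 + p * real (sum_list xs) / real m *
        (real (Suc (sum_list xs)) ^ 2 - real (sum_list xs) ^ 2)) * 1)"
    unfolding m by (rule proc_expectation_Suc_sum_list[OF assms(1,2)]) simp
  also have "\<dots> = proc_expectation p m (\<lambda>xs. (1 + 2 * p / real m) * real (sum_list xs) ^ 2 +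
      p / real m * real (sum_list xs))"
    by (simp add: field_simps power2_eq_square add_divide_distrib)
  also have "\<dots> = (1 + 2 * p / real m) * proc_expectation p m (\<lambda>xs. real (sum_list xs) ^ 2) +
      p / real m * a_seq p m"
    using proc_expectation_sum_list[OF assms] by (simp add: integrable_proc_pmf)
  finally show ?thesis
    by simp
qed

lemma pochhammer_nonneg_real: "0 \<le> (x::real) \<Longrightarrow> 0 \<le> pochhammer x k"
  unfolding pochhammer_prod by (intro prod_nonneg) auto

lemma power_le_pochhammer: "0 \<le> (x::real) \<Longrightarrow> x ^ k \<le> pochhammer x k"
proof (induction k)
  case (Suc k)
  have "x ^ Suc k = x ^ k * x"
    by (simp add: mult.commute)
  also have "\<dots> \<le> pochhammer x k * (x + real k)"
    using Suc by (intro mult_mono) (auto simp: pochhammer_nonneg_real)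
  finally show ?case
    by (simp add: pochhammer_rec' mult.commute)
qed simp

lemma pochhammer_Suc_le_power:
  "0 \<le> (x::real) \<Longrightarrow> pochhammer x (Suc k) \<le> x ^ Suc k + real k ^ 2 * pochhammer x k"
proof (induction k)
  case (Suc k)
  have nonneg: "0 \<le> pochhammer x k" "0 \<le> pochhammer x (Suc k)"
    using Suc.prems by (auto simp: pochhammer_nonneg_real)
  have "pochhammer x (Suc (Suc k)) = x * pochhammer x (Suc k) + real (Suc k) * pochhammer x (Suc k)"
    by (simp add: pochhammer_rec'[of x "Suc k"] algebra_simps)
  also have "x * pochhammer x (Suc k) \<le> x * (x ^ Suc k + real k ^ 2 * pochhammer x k)"
    using Suc by (intro mult_left_mono) auto
  also have "\<dots> = x ^ Suc (Suc k) + real k ^ 2 * (x * pochhammer x k)"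
    by (simp add: algebra_simps)
  also have "\<dots> \<le> x ^ Suc (Suc k) + real k ^ 2 * pochhammer x (Suc k)"
    using nonneg Suc.prems by (intro add_left_mono mult_left_mono) (auto simp: pochhammer_rec' mult_right_mono)
  finally have "pochhammer x (Suc (Suc k))
      \<le> x ^ Suc (Suc k) + (real k ^ 2 + real (Suc k)) * pochhammer x (Suc k)"
    by (simp add: algebra_simps)
  also have "\<dots> \<le> x ^ Suc (Suc k) + real (Suc k) ^ 2 * pochhammer x (Suc k)"
    using nonneg by (intro add_left_mono mult_right_mono) (auto simp: power2_eq_square algebra_simps)
  finally show ?case .
qed simp

lemma proc_expectation_power_le:
  assumes "0 \<le> p" "p \<le> 1" "1 \<le> n"
  shows "proc_expectation p n (\<lambda>xs. real (sum_list xs) ^ k) \<le> fact k * a_seq (real k * p) n"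
  unfolding proc_expectation_pochhammer_sum_list[OF assms, symmetric]
  by (intro integral_mono integrable_proc_pmf power_le_pochhammer) auto

lemma proc_expectation_power_ge:
  assumes "0 \<le> p" "p \<le> 1" "1 \<le> n"
  shows "fact (Suc k) * a_seq (real (Suc k) * p) n - real k ^ 2 * (fact k * a_seq (real k * p) n)
    \<le> proc_expectation p n (\<lambda>xs. real (sum_list xs) ^ Suc k)"
proof -
  have "proc_expectation p n (\<lambda>xs. pochhammer (real (sum_list xs)) (Suc k))
      \<le> proc_expectation p n (\<lambda>xs. real (sum_list xs) ^ Suc k + real k ^ 2 * pochhammer (real (sum_list xs)) k)"
    by (intro integral_mono integrable_proc_pmf pochhammer_Suc_le_power) auto
  then show ?thesis
    by (simp add: integrable_proc_pmf proc_expectation_pochhammer_sum_list[OF assms])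
qed

lemma proc_moment_asymptotics:
  assumes "0 < p" "p \<le> 1"
  shows "(\<lambda>n. proc_expectation p n (\<lambda>xs. real (sum_list xs) ^ Suc k) / real n powr (real (Suc k) * p))
     \<longlonglongrightarrow> fact (Suc k) / Gamma (1 + real (Suc k) * p)"
proof -
  let ?x = "real (Suc k) * p" and ?y = "real k * p"
  have "0 \<le> ?x" "0 \<le> ?y"
    using assms by simp_all
  then have x_gt: "-1 < ?x" and y_gt: "-1 < ?y"
    by linarith+
  define main where "main n = fact (Suc k) * a_seq ?x n" for n
  define err where "err n = main n - proc_expectation p n (\<lambda>xs. real (sum_list xs) ^ Suc k)" for n
  define bound where "bound n = real k ^ 2 * fact k * (a_seq ?y n / real n powr ?y) * real n powr (- p)" for n
  have err_bounds: "0 \<le> err n / real n powr ?x \<and> err n / real n powr ?x \<le> bound n"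
    if "1 \<le> n" for n
  proof -
    have "real n powr ?x = real n powr ?y * real n powr p"
      by (simp add: powr_add[symmetric] algebra_simps)
    then have "bound n = real k ^ 2 * (fact k * a_seq ?y n) / real n powr ?x"
      using that by (simp add: bound_def powr_minus field_simps)
    moreover have "0 \<le> err n" "err n \<le> real k ^ 2 * (fact k * a_seq ?y n)"
      using proc_expectation_power_le[of p n "Suc k"] proc_expectation_power_ge[of p n k] assms that
      by (auto simp: err_def main_def)
    ultimately show ?thesis
      by (simp add: divide_right_mono)
  qed
  have "(\<lambda>n. a_seq ?y n / real n powr ?y) \<longlonglongrightarrow> 1 / Gamma (1 + ?y)"
    using y_gt by (rule a_seq_asymptotics)
  moreover have "(\<lambda>n. real n powr (- p)) \<longlonglongrightarrow> 0"
    using assms by (intro tendsto_neg_powr filterlim_real_sequentially) auto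
  ultimately have "bound \<longlonglongrightarrow> real k ^ 2 * fact k * (1 / Gamma (1 + ?y)) * 0"
    unfolding bound_def by (intro tendsto_mult tendsto_const)
  then have bound_lim: "bound \<longlonglongrightarrow> 0"
    by simp
  have "\<forall>\<^sub>F n in sequentially. 0 \<le> err n / real n powr ?x"
    using eventually_ge_at_top[of 1] by eventually_elim (use err_bounds in blast)
  moreover have "\<forall>\<^sub>F n in sequentially. err n / real n powr ?x \<le> bound n"
    using eventually_ge_at_top[of 1] by eventually_elim (use err_bounds in blast)
  ultimately have err_lim: "(\<lambda>n. err n / real n powr ?x) \<longlonglongrightarrow> 0"
    using tendsto_const bound_lim by (rule tendsto_sandwich)
  have "(\<lambda>n. fact (Suc k) * (a_seq ?x n / real n powr ?x)) \<longlonglongrightarrow> fact (Suc k) * (1 / Gamma (1 + ?x))"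
    using x_gt by (intro tendsto_mult tendsto_const a_seq_asymptotics)
  then have "(\<lambda>n. main n / real n powr ?x) \<longlonglongrightarrow> fact (Suc k) / Gamma (1 + ?x)"
    by (simp add: main_def)
  from tendsto_diff[OF this err_lim]
  have "(\<lambda>n. main n / real n powr ?x - err n / real n powr ?x) \<longlonglongrightarrow> fact (Suc k) / Gamma (1 + ?x)"
    by simp
  then show ?thesis
    by (simp add: err_def diff_divide_distrib)
qed

lemma proc_expectation_normalized_power_le:
  assumes "0 \<le> p" "p \<le> 1"
  shows "proc_expectation p n (\<lambda>xs. (real (sum_list xs) / a_seq p n) ^ k) \<le> fact k"
proof (cases "1 \<le> n")
  case True
  have pos: "0 < a_seq p n"
    using assms by (intro a_seq_pos) auto
  have "proc_expectation p n (\<lambda>xs. (real (sum_list xs) / a_seq p n) ^ k) =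
      proc_expectation p n (\<lambda>xs. real (sum_list xs) ^ k) / a_seq p n ^ k"
    by (simp add: power_divide)
  also have "\<dots> \<le> fact k * a_seq (real k * p) n / a_seq p n ^ k"
    using proc_expectation_power_le[OF assms True, of k] pos by (intro divide_right_mono) auto
  also have "\<dots> \<le> fact k * a_seq p n ^ k / a_seq p n ^ k"
    using a_seq_mult_le_power[of p k n] assms pos by (intro divide_right_mono mult_left_mono) auto
  finally show ?thesis
    using pos by simp
next
  case False
  then have "n = 0"
    by simp
  then show ?thesis
    by (cases k) simp_all
qed

definition second_moment_ratio :: "real \<Rightarrow> nat \<Rightarrow> real" where
  "second_moment_ratio p n = proc_expectation p n (\<lambda>xs. real (sum_list xs) ^ 2) / a_seq p n ^ 2"

lemma second_moment_ratio_Suc_le: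
  assumes "0 \<le> p" "p \<le> 1" "1 \<le> m"
  shows "second_moment_ratio p (Suc m) \<le> second_moment_ratio p m + real m powr (- (1 + p))"
proof -
  define E where "E = proc_expectation p m (\<lambda>xs. real (sum_list xs) ^ 2)"
  define a where "a = a_seq p m"
  define r where "r = p / real m"
  have "0 \<le> E" "0 < a" "0 \<le> r"
    using assms a_seq_pos[of p m] by (auto simp: E_def a_def r_def)
  have "second_moment_ratio p (Suc m) = ((1 + 2 * r) * E + r * a) / (a ^ 2 * (1 + r) ^ 2)"
    unfolding second_moment_ratio_def proc_expectation_sum_list_squared_Suc[OF assms] a_seq_Suc[OF assms(3)]
    by (simp add: E_def a_def r_def power_mult_distrib)
  also have "\<dots> = (1 + 2 * r) / (1 + r) ^ 2 * (E / a ^ 2) + r / ((1 + r) ^ 2 * a)"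
  proof -
    have "a \<noteq> 0" "1 + r \<noteq> 0"
      using \<open>0 < a\<close> \<open>0 \<le> r\<close> by auto
    then show ?thesis
      by (simp add: field_simps) algebra
  qed
  also have "\<dots> \<le> E / a ^ 2 + r / a"
  proof (rule add_mono)
    have "1 \<le> (1 + r) ^ 2" "1 + 2 * r \<le> (1 + r) ^ 2"
      using \<open>0 \<le> r\<close> by (simp_all add: power2_eq_square algebra_simps)
    then have "(1 + 2 * r) / (1 + r) ^ 2 \<le> 1"
      by (simp add: divide_le_eq_1)
    moreover have "0 \<le> E / a ^ 2"
      using \<open>0 \<le> E\<close> by simp
    ultimately show "(1 + 2 * r) / (1 + r) ^ 2 * (E / a ^ 2) \<le> E / a ^ 2"
      using mult_right_mono[of "(1 + 2 * r) / (1 + r) ^ 2" 1 "E / a ^ 2"] by (simp only: mult.left_neutral)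
    show "r / ((1 + r) ^ 2 * a) \<le> r / a"
      using \<open>1 \<le> (1 + r) ^ 2\<close> \<open>0 < a\<close> \<open>0 \<le> r\<close> by (intro divide_left_mono) auto
  qed
  also have "r / a \<le> real m powr (- (1 + p))"
  proof -
    have "real m powr p \<le> a"
      unfolding a_def using assms by (rule powr_le_a_seq)
    then have "r / a \<le> (1 / real m) / real m powr p"
      using assms \<open>0 \<le> r\<close> by (intro frac_le) (auto simp: r_def divide_right_mono)
    also have "\<dots> = real m powr (- (1 + p))"
      using assms unfolding powr_minus by (simp add: powr_add divide_inverse)
    finally show ?thesis .
  qed
  finally show ?thesis
    by (simp add: second_moment_ratio_def E_def a_def)
qed

lemma second_moment_ratio_diff_le:
  assumes "0 \<le> p" "p \<le> 1" "1 \<le> n" "n \<le> m"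
  shows "second_moment_ratio p m - second_moment_ratio p n \<le> real (m - n) * real n powr (- (1 + p))"
  using assms(4)
proof (induction m rule: dec_induct)
  case (step m)
  have "real m powr (- (1 + p)) \<le> real n powr (- (1 + p))"
    using step.hyps assms by (intro powr_mono2') auto
  then show ?case
    using second_moment_ratio_Suc_le[of p m] step assms by (simp add: of_nat_diff algebra_simps)
qed simp

lemma power_div_fact_le_exp: "0 \<le> (x::real) \<Longrightarrow> x ^ m / fact m \<le> exp x"
proof -
  assume "0 \<le> x"
  then have "(\<Sum>n\<in>{m}. inverse (fact n) * x ^ n) \<le> (\<Sum>n. inverse (fact n) * x ^ n)"
    by (intro sum_le_suminf summable_exp) auto
  then show ?thesis
    by (simp add: exp_def divide_inverse mult.commute scaleR_conv_of_real)
qed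

lemma fact_floor_le_Gamma:
  fixes x :: real
  assumes "1 \<le> x"
  shows "fact (nat \<lfloor>x\<rfloor>) \<le> Gamma (1 + x)"
proof -
  define m where "m = real (nat \<lfloor>x\<rfloor>)"
  have "1 \<le> m" "m \<le> x"
    unfolding m_def using assms by (simp_all add: le_nat_floor)
  then have "Gamma (1 + m) \<le> Gamma (1 + x)"
    using Gamma_real_strict_mono[of "1 + m" "1 + x"] by (cases "m = x") auto
  then show ?thesis
    by (simp add: m_def Gamma_fact)
qed

text \<open>With \<open>m = \<lfloor>k p\<rfloor>\<close> and \<open>D = (2 B) powr (1 / p)\<close>, the terms are bounded by
  \<open>(1/2)^k D^(m+1) / m! \<le> (1/2)^k D exp D\<close>.\<close>
lemma summable_power_div_Gamma:
  assumes "0 < p"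
  shows "summable (\<lambda>k. c ^ k / Gamma (1 + real k * p))"
proof (rule summable_comparison_test_ev)
  define B where "B = max 1 \<bar>c\<bar>"
  define D where "D = (2 * B) powr (1 / p)"
  have "1 \<le> B" "\<bar>c\<bar> \<le> B" "0 < D"
    unfolding B_def D_def by auto
  show "summable (\<lambda>k. D * exp D * (1/2::real) ^ k)"
    by (intro summable_mult summable_geometric) auto
  obtain N :: nat where "1 / p \<le> real N"
    using real_arch_simple by blast
  then have "\<forall>k\<ge>N. 1 \<le> real k * p"
    using assms by (auto simp: field_simps intro: order_trans[of _ "real N * p"])
  then show "\<forall>\<^sub>F k in sequentially. norm (c ^ k / Gamma (1 + real k * p)) \<le> D * exp D * (1/2) ^ k"
    unfolding eventually_sequentially
  proof (intro exI allI impI)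
    fix k assume "N \<le> k"
    then have kp: "1 \<le> real k * p"
      using \<open>\<forall>k\<ge>N. 1 \<le> real k * p\<close> by blast
    define m where "m = nat \<lfloor>real k * p\<rfloor>"
    have "real k * p < real m + 1"
      unfolding m_def using kp by linarith
    then have "real k \<le> (real m + 1) / p"
      using assms by (simp add: field_simps)
    have "(2 * B) ^ k = (2 * B) powr real k"
      using \<open>1 \<le> B\<close> by (simp add: powr_realpow)
    also have "\<dots> \<le> (2 * B) powr ((real m + 1) / p)"
      using \<open>1 \<le> B\<close> \<open>real k \<le> (real m + 1) / p\<close> by (intro powr_mono) auto
    also have "\<dots> = D powr real (m + 1)"
      unfolding D_def by (simp add: powr_powr add.commute)
    also have "\<dots> = D ^ (m + 1)"
      using \<open>0 < D\<close> by (rule powr_realpow)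
    finally have "(2 * B) ^ k \<le> D ^ (m + 1)" .
    have "norm (c ^ k / Gamma (1 + real k * p)) \<le> B ^ k / fact m"
      using fact_floor_le_Gamma[OF kp] \<open>\<bar>c\<bar> \<le> B\<close>
      by (simp add: m_def abs_mult power_abs frac_le power_mono)
    also have "\<dots> = (1/2) ^ k * ((2 * B) ^ k / fact m)"
      by (simp add: power_mult_distrib field_simps)
    also have "\<dots> \<le> (1/2) ^ k * (D * (D ^ m / fact m))"
      using \<open>(2 * B) ^ k \<le> D ^ (m + 1)\<close> by (intro mult_left_mono) (auto simp: divide_right_mono)
    also have "\<dots> \<le> (1/2) ^ k * (D * exp D)"
      using \<open>0 < D\<close> power_div_fact_le_exp[of D m] by (intro mult_left_mono) auto
    finally show "norm (c ^ k / Gamma (1 + real k * p)) \<le> D * exp D * (1/2) ^ k"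
      by (simp add: mult.commute)
  qed
qed

lemma square_integral_le_of_AE_tendsto:
  fixes f :: "nat \<Rightarrow> 'a \<Rightarrow> real"
  assumes [measurable]: "\<And>n. f n \<in> borel_measurable M" "g \<in> borel_measurable M"
    and lim: "AE x in M. (\<lambda>n. f n x) \<longlonglongrightarrow> g x"
    and int: "\<And>n. integrable M (\<lambda>x. (f n x)^2)"
    and bound: "\<And>n. integral\<^sup>L M (\<lambda>x. (f n x)^2) \<le> B"
  shows "integrable M (\<lambda>x. (g x)^2) \<and> integral\<^sup>L M (\<lambda>x. (g x)^2) \<le> B"
proof -
  have "0 \<le> integral\<^sup>L M (\<lambda>x. (f 0 x)^2)"
    by (intro integral_nonneg_AE) auto
  then have "0 \<le> B"
    using bound[of 0] by linarith
  have "(\<integral>\<^sup>+x. ennreal ((g x)^2) \<partial>M) = (\<integral>\<^sup>+x. liminf (\<lambda>n. ennreal ((f n x)^2)) \<partial>M)"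
  proof (rule nn_integral_cong_AE)
    show "AE x in M. ennreal ((g x)^2) = liminf (\<lambda>n. ennreal ((f n x)^2))"
      using lim
    proof eventually_elim
      case (elim x)
      then have "(\<lambda>n. ennreal ((f n x)^2)) \<longlonglongrightarrow> ennreal ((g x)^2)"
        by (intro tendsto_intros)
      then show ?case
        by (metis lim_imp_Liminf trivial_limit_sequentially)
    qed
  qed
  also have "\<dots> \<le> liminf (\<lambda>n. \<integral>\<^sup>+x. ennreal ((f n x)^2) \<partial>M)"
    by (rule nn_integral_liminf) measurable
  also have "\<dots> \<le> ennreal B"
    using bound int
    by (intro Liminf_le always_eventually allI) (simp_all add: nn_integral_eq_integral ennreal_leI)
  finally have fatou: "(\<integral>\<^sup>+x. ennreal ((g x)^2) \<partial>M) \<le> ennreal B" .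
  then have "integrable M (\<lambda>x. (g x)^2)"
    by (intro integrableI_bounded) (auto simp: less_top[symmetric] top_unique)
  with fatou \<open>0 \<le> B\<close> show ?thesis
    by (subst (asm) nn_integral_eq_integral) (auto simp: ennreal_le_iff)
qed


lemma LIMSEQ_of_uniform_approximation:
  fixes e :: "nat \<Rightarrow> real"
  assumes "\<And>\<epsilon>. 0 < \<epsilon> \<Longrightarrow> \<exists>a. a \<longlonglongrightarrow> 0 \<and> (\<forall>n. \<bar>e n - a n\<bar> \<le> \<epsilon>)"
  shows "e \<longlonglongrightarrow> 0"
proof (rule LIMSEQ_I)
  fix r :: real assume "0 < r"
  then obtain a where "a \<longlonglongrightarrow> 0" and a: "\<And>n. \<bar>e n - a n\<bar> \<le> r / 2"
    using assms[of "r / 2"] by auto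
  then obtain N where N: "\<And>n. N \<le> n \<Longrightarrow> norm (a n) < r / 2"
    using LIMSEQ_D[of a 0 "r / 2"] \<open>0 < r\<close> by auto
  show "\<exists>N. \<forall>n\<ge>N. norm (e n - 0) < r"
  proof (intro exI allI impI)
    fix n assume "N \<le> n"
    have "\<bar>e n\<bar> \<le> \<bar>e n - a n\<bar> + \<bar>a n\<bar>"
      using abs_triangle_ineq[of "e n - a n" "a n"] by simp
    with N[OF \<open>N \<le> n\<close>] a[of n] show "norm (e n - 0) < r"
      by simp
  qed
qed

lemma (in finite_measure) integral_tail_le_square:
  fixes f :: "'a \<Rightarrow> real"
  assumes "AE x in M. 0 \<le> f x" "integrable M f" "integrable M (\<lambda>x. (f x)^2)" "0 < T"
  shows "0 \<le> integral\<^sup>L M (\<lambda>x. f x - min (f x) T)"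
    and "integral\<^sup>L M (\<lambda>x. f x - min (f x) T) \<le> integral\<^sup>L M (\<lambda>x. (f x)^2) / T"
proof -
  have tail: "y - min y T \<le> y^2 / T" if "0 \<le> y" for y :: real
  proof (cases "y \<le> T")
    case False
    then have "y * T \<le> y * y"
      using that by (intro mult_left_mono) auto
    then have "y \<le> y^2 / T"
      using \<open>0 < T\<close> by (simp add: field_simps power2_eq_square)
    with False \<open>0 < T\<close> show ?thesis
      by simp
  qed (use that \<open>0 < T\<close> in simp)
  have "AE x in M. f x - min (f x) T \<le> (f x)^2 / T"
    using assms(1) by eventually_elim (rule tail)
  then have "integral\<^sup>L M (\<lambda>x. f x - min (f x) T) \<le> integral\<^sup>L M (\<lambda>x. (f x)^2 / T)"
    using assms(2,3) by (intro integral_mono_AE) auto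
  then show "integral\<^sup>L M (\<lambda>x. f x - min (f x) T) \<le> integral\<^sup>L M (\<lambda>x. (f x)^2) / T"
    by simp
  show "0 \<le> integral\<^sup>L M (\<lambda>x. f x - min (f x) T)"
    by (intro integral_nonneg_AE) auto
qed


text \<open>Truncate at level \<open>T\<close>: dominated convergence below \<open>T\<close>, tails bounded by \<open>B / T\<close>.\<close>
lemma (in finite_measure) integral_tendsto_of_square_bounded:
  fixes f :: "nat \<Rightarrow> 'a \<Rightarrow> real"
  assumes [measurable]: "\<And>n. f n \<in> borel_measurable M" "g \<in> borel_measurable M"
    and lim: "AE x in M. (\<lambda>n. f n x) \<longlonglongrightarrow> g x"
    and nonneg: "\<And>n x. x \<in> space M \<Longrightarrow> 0 \<le> f n x"
    and int: "\<And>n. integrable M (\<lambda>x. (f n x)^2)"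
    and bound: "\<And>n. integral\<^sup>L M (\<lambda>x. (f n x)^2) \<le> B"
  shows "integrable M g" and "(\<lambda>n. integral\<^sup>L M (f n)) \<longlonglongrightarrow> integral\<^sup>L M g"
proof -
  have f_nonneg: "AE x in M. 0 \<le> f n x" for n
    using nonneg by (rule AE_I2)
  have g_nonneg: "AE x in M. 0 \<le> g x"
    using lim AE_space
  proof eventually_elim
    case (elim x)
    show ?case
      by (rule LIMSEQ_le_const[OF elim(1)]) (use nonneg elim(2) in auto)
  qed
  have g_square: "integrable M (\<lambda>x. (g x)^2)" "integral\<^sup>L M (\<lambda>x. (g x)^2) \<le> B"
    using square_integral_le_of_AE_tendsto[OF assms(1,2) lim int bound] by auto
  show int_g: "integrable M g"
    by (rule square_integrable_imp_integrable[OF _ g_square(1)]) measurable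
  have int_f: "integrable M (f n)" for n
    by (rule square_integrable_imp_integrable[OF _ int]) measurable
  have "0 \<le> integral\<^sup>L M (\<lambda>x. (f 0 x)^2)"
    by (intro integral_nonneg_AE) auto
  then have "0 \<le> B"
    using bound[of 0] by linarith
  have "(\<lambda>n. integral\<^sup>L M (f n) - integral\<^sup>L M g) \<longlonglongrightarrow> 0"
  proof (rule LIMSEQ_of_uniform_approximation)
    fix \<epsilon> :: real assume "0 < \<epsilon>"
    define T where "T = (B + 1) / \<epsilon>"
    have "0 < T" "B / T \<le> \<epsilon>"
      using \<open>0 < \<epsilon>\<close> \<open>0 \<le> B\<close> by (auto simp: T_def field_simps)
    note f_tail = integral_tail_le_square[OF f_nonneg int_f int \<open>0 < T\<close>]
    note g_tail = integral_tail_le_square[OF g_nonneg int_g g_square(1) \<open>0 < T\<close>]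
    have f_tail_le: "integral\<^sup>L M (\<lambda>x. f n x - min (f n x) T) \<le> B / T" for n
      using f_tail(2)[of n] divide_right_mono[OF bound[of n], of T] \<open>0 < T\<close> by linarith
    have g_tail_le: "integral\<^sup>L M (\<lambda>x. g x - min (g x) T) \<le> B / T"
      using g_tail(2) divide_right_mono[OF g_square(2), of T] \<open>0 < T\<close> by linarith
    show "\<exists>a. a \<longlonglongrightarrow> 0 \<and> (\<forall>n. \<bar>integral\<^sup>L M (f n) - integral\<^sup>L M g - a n\<bar> \<le> \<epsilon>)"
    proof (intro exI conjI allI)
      have "AE x in M. (\<lambda>n. min (f n x) T) \<longlonglongrightarrow> min (g x) T"
        using lim by eventually_elim (intro tendsto_intros)
      moreover have "AE x in M. norm (min (f n x) T) \<le> T" for n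
        using f_nonneg[of n] by eventually_elim (use \<open>0 < T\<close> in auto)
      moreover have "(\<lambda>x. min (g x) T) \<in> borel_measurable M" "(\<lambda>x. min (f n x) T) \<in> borel_measurable M" for n
        by measurable
      ultimately have "(\<lambda>n. integral\<^sup>L M (\<lambda>x. min (f n x) T)) \<longlonglongrightarrow> integral\<^sup>L M (\<lambda>x. min (g x) T)"
        by (intro integral_dominated_convergence[where w="\<lambda>_. T"] integrable_const)
      then show "(\<lambda>n. integral\<^sup>L M (\<lambda>x. min (f n x) T) - integral\<^sup>L M (\<lambda>x. min (g x) T)) \<longlonglongrightarrow> 0"
        by (rule Lim_null[THEN iffD1])
      fix n
      have "integral\<^sup>L M (f n) - integral\<^sup>L M g -
          (integral\<^sup>L M (\<lambda>x. min (f n x) T) - integral\<^sup>L M (\<lambda>x. min (g x) T))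
        = integral\<^sup>L M (\<lambda>x. f n x - min (f n x) T) - integral\<^sup>L M (\<lambda>x. g x - min (g x) T)"
        using int_f[of n] int_g by simp
      then show "\<bar>integral\<^sup>L M (f n) - integral\<^sup>L M g -
          (integral\<^sup>L M (\<lambda>x. min (f n x) T) - integral\<^sup>L M (\<lambda>x. min (g x) T))\<bar> \<le> \<epsilon>"
        using f_tail(1)[of n] f_tail_le[of n] g_tail(1) g_tail_le \<open>B / T \<le> \<epsilon>\<close> by linarith
    qed
  qed
  then show "(\<lambda>n. integral\<^sup>L M (f n)) \<longlonglongrightarrow> integral\<^sup>L M g"
    by (rule Lim_null[THEN iffD2])
qed

lemma strict_mono_bracket_index:
  fixes N :: "nat \<Rightarrow> nat"
  assumes "strict_mono N"
  obtains J where "\<And>n. N 0 \<le> n \<Longrightarrow> N (J n) \<le> n \<and> n < N (Suc (J n))"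
    and "filterlim J at_top sequentially"
proof -
  have "\<exists>j. N j \<le> n \<and> n < N (Suc j)" if "N 0 \<le> n" for n
  proof -
    have "n < N (Suc n)"
      using strict_mono_imp_increasing[OF assms, of "Suc n"] by simp
    then have ex: "\<exists>j. n < N j" ..
    define j where "j = (LEAST j. n < N j)"
    have "n < N j" and least: "\<And>i. n < N i \<Longrightarrow> j \<le> i"
      unfolding j_def using LeastI_ex[OF ex] Least_le by auto
    moreover have "j \<noteq> 0"
      using \<open>n < N j\<close> that by (cases j) auto
    moreover have "N (j - 1) \<le> n"
      using least[of "j - 1"] \<open>j \<noteq> 0\<close> by linarith
    ultimately show ?thesis
      by (intro exI[of _ "j - 1"]) simp
  qed
  then obtain J where J: "\<And>n. N 0 \<le> n \<Longrightarrow> N (J n) \<le> n \<and> n < N (Suc (J n))"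
    by metis
  have "filterlim J at_top sequentially"
    unfolding filterlim_at_top
  proof
    fix j0
    show "\<forall>\<^sub>F n in sequentially. j0 \<le> J n"
      using eventually_ge_at_top[of "N j0"]
    proof eventually_elim
      case (elim n)
      then have "N 0 \<le> n"
        using strict_mono_less_eq[OF assms, of 0 j0] by simp
      with elim have "N j0 < N (Suc (J n))"
        using J by fastforce
      then show ?case
        using strict_mono_less[OF assms] by fastforce
    qed
  qed
  with J that show ?thesis
    by blast
qed

text \<open>For \<open>N j \<le> n < N (j + 1)\<close>, monotonicity traps \<open>h n / a n\<close> between
  \<open>h (N j) / a (N (j + 1))\<close> and \<open>h (N (j + 1)) / a (N j)\<close>.\<close>
lemma LIMSEQ_of_monotone_subseq:
  fixes h a :: "nat \<Rightarrow> real" and N :: "nat \<Rightarrow> nat"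
  assumes "mono h" "\<And>n. 0 \<le> h n" "mono a" "\<And>n. 0 < a n" "strict_mono N"
    and lim: "(\<lambda>j. h (N j) / a (N j)) \<longlonglongrightarrow> L"
    and ratio: "(\<lambda>j. a (N (Suc j)) / a (N j)) \<longlonglongrightarrow> 1"
  shows "(\<lambda>n. h n / a n) \<longlonglongrightarrow> L"
proof -
  obtain J where J: "\<And>n. N 0 \<le> n \<Longrightarrow> N (J n) \<le> n \<and> n < N (Suc (J n))"
    and J_lim: "filterlim J at_top sequentially"
    using strict_mono_bracket_index[OF assms(5)] by blast
  have lo: "(\<lambda>j. h (N j) / a (N (Suc j))) \<longlonglongrightarrow> L"
  proof -
    have "(\<lambda>j. h (N j) / a (N j) * inverse (a (N (Suc j)) / a (N j))) \<longlonglongrightarrow> L * inverse 1"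
      by (intro tendsto_mult lim tendsto_inverse ratio) simp
    also have "(\<lambda>j. h (N j) / a (N j) * inverse (a (N (Suc j)) / a (N j))) = (\<lambda>j. h (N j) / a (N (Suc j)))"
      using assms(4) by (intro ext) (simp add: inverse_divide less_imp_neq[symmetric])
    finally show ?thesis
      by simp
  qed
  have hi: "(\<lambda>j. h (N (Suc j)) / a (N j)) \<longlonglongrightarrow> L"
  proof -
    have "(\<lambda>j. h (N (Suc j)) / a (N (Suc j)) * (a (N (Suc j)) / a (N j))) \<longlonglongrightarrow> L * 1"
      by (intro tendsto_mult LIMSEQ_Suc[OF lim] ratio)
    also have "(\<lambda>j. h (N (Suc j)) / a (N (Suc j)) * (a (N (Suc j)) / a (N j))) = (\<lambda>j. h (N (Suc j)) / a (N j))"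
      using assms(4) by (intro ext) (simp add: less_imp_neq[symmetric])
    finally show ?thesis
      by simp
  qed
  show ?thesis
  proof (rule tendsto_sandwich[OF _ _ filterlim_compose[OF lo J_lim] filterlim_compose[OF hi J_lim]])
    show "\<forall>\<^sub>F n in sequentially. h (N (J n)) / a (N (Suc (J n))) \<le> h n / a n"
      using eventually_ge_at_top[of "N 0"]
      by eventually_elim (use J assms(1-4) in \<open>auto intro!: frac_le simp: mono_def less_imp_le\<close>)
    show "\<forall>\<^sub>F n in sequentially. h n / a n \<le> h (N (Suc (J n))) / a (N (J n))"
      using eventually_ge_at_top[of "N 0"]
      by eventually_elim (use J assms(1-4) in \<open>auto intro!: frac_le simp: mono_def less_imp_le\<close>)
  qed
qed


text \<open>Chebyshev at level \<open>(j + 1)^-2\<close> and Borel--Cantelli: almost surely \<open>\<bar>D j\<bar> < (j + 1)^-2\<close>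
  eventually.\<close>
lemma (in prob_space) AE_summable_of_square_integral_le:
  fixes D :: "nat \<Rightarrow> 'a \<Rightarrow> real"
  assumes [measurable]: "\<And>j. D j \<in> borel_measurable M"
    and int: "\<And>j. integrable M (\<lambda>\<omega>. (D j \<omega>)^2)"
    and bound: "\<And>j. integral\<^sup>L M (\<lambda>\<omega>. (D j \<omega>)^2) \<le> C * real (Suc j) powr (-6)"
  shows "AE \<omega> in M. summable (\<lambda>j. D j \<omega>)"
proof -
  define \<epsilon> :: "nat \<Rightarrow> real" where "\<epsilon> j = real (Suc j) powr (-2)" for j
  have \<epsilon>_pos: "0 < \<epsilon> j" for j
    by (simp add: \<epsilon>_def)
  have summable_powr: "summable (\<lambda>j. real (Suc j) powr (-2))"
    using summable_real_powr_iff[of "-2"] by (subst summable_Suc_iff) simp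
  have "measure M {\<omega>\<in>space M. \<epsilon> j \<le> \<bar>D j \<omega>\<bar>} \<le> C * real (Suc j) powr (-2)" for j
  proof -
    have "measure M {\<omega>\<in>space M. \<epsilon> j \<le> \<bar>D j \<omega>\<bar>} \<le> integral\<^sup>L M (\<lambda>\<omega>. (D j \<omega>)^2) / (\<epsilon> j)^2"
      using \<epsilon>_pos int by (intro second_moment_method) auto
    also have "\<dots> \<le> C * real (Suc j) powr (-6) / (\<epsilon> j)^2"
      using bound by (intro divide_right_mono) auto
    also have "\<dots> = C * (real (Suc j) powr (-6) / real (Suc j) powr (-4))"
      by (simp add: \<epsilon>_def powr_power)
    also have "\<dots> = C * real (Suc j) powr (-2)"
      by (simp add: powr_diff[symmetric])
    finally show ?thesis .
  qed
  then have "summable (\<lambda>j. measure M {\<omega>\<in>space M. \<epsilon> j \<le> \<bar>D j \<omega>\<bar>})"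
    by (intro summable_comparison_test[OF _ summable_mult[OF summable_powr, of C]]) auto
  then have "AE \<omega> in M. \<forall>\<^sub>F j in sequentially. \<omega> \<in> space M - {\<omega>\<in>space M. \<epsilon> j \<le> \<bar>D j \<omega>\<bar>}"
    by (intro borel_cantelli_AE1) (auto simp: less_top[symmetric])
  then show ?thesis
  proof eventually_elim
    case (elim \<omega>)
    then have "\<forall>\<^sub>F j in sequentially. norm (norm (D j \<omega>)) \<le> \<epsilon> j"
      by eventually_elim auto
    then have "summable (\<lambda>j. norm (D j \<omega>))"
      using summable_powr unfolding \<epsilon>_def[symmetric] by (rule summable_comparison_test_ev)
    then show ?case
      by (rule summable_norm_cancel)
  qed
qed

section \<open>The process on a probability space\<close>

locale proc_realization = prob_space M for M :: "'a measure" +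
  fixes X :: "nat \<Rightarrow> 'a \<Rightarrow> nat" and p :: real
  assumes p_pos: "0 < p" and p_less_1: "p < 1"
    and measurable_X [measurable]: "\<And>i. X i \<in> M \<rightarrow>\<^sub>M count_space UNIV"
    and law: "\<And>n xs. length xs = n \<Longrightarrow>
      measure M {\<omega>\<in>space M. \<forall>i<n. X (Suc i) \<omega> = xs ! i} = pmf (proc_pmf p n) xs"
begin

definition prefix :: "nat \<Rightarrow> 'a \<Rightarrow> nat list" where
  "prefix n \<omega> = map (\<lambda>i. X (Suc i) \<omega>) [0..<n]"

definition S :: "nat \<Rightarrow> 'a \<Rightarrow> nat" where
  "S n \<omega> = (\<Sum>i=1..n. X i \<omega>)"

lemma length_prefix [simp]: "length (prefix n \<omega>) = n"
  by (simp add: prefix_def)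

lemma take_prefix: "n \<le> m \<Longrightarrow> take n (prefix m \<omega>) = prefix n \<omega>"
  by (simp add: prefix_def take_map)

lemma S_eq_sum_list_prefix: "S n \<omega> = sum_list (prefix n \<omega>)"
  by (induction n) (simp_all add: S_def prefix_def)

lemma prefix_eq_iff: "length xs = n \<Longrightarrow> prefix n \<omega> = xs \<longleftrightarrow> (\<forall>i<n. X (Suc i) \<omega> = xs ! i)"
  by (auto simp: prefix_def list_eq_iff_nth_eq)

lemma measurable_prefix [measurable]: "prefix n \<in> M \<rightarrow>\<^sub>M count_space UNIV"
proof (subst measurable_count_space_eq2_countable, safe)
  fix xs :: "nat list"
  show "prefix n -` {xs} \<inter> space M \<in> sets M"
  proof (cases "length xs = n")
    case True
    then have "prefix n -` {xs} \<inter> space M = {\<omega>\<in>space M. \<forall>i<n. X (Suc i) \<omega> = xs ! i}"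
      using prefix_eq_iff by auto
    also have "\<dots> \<in> sets M"
      by measurable
    finally show ?thesis .
  next
    case False
    then have "prefix n -` {xs} \<inter> space M = {}"
      by auto
    then show ?thesis
      by simp
  qed
qed auto

lemma measurable_S [measurable]: "S n \<in> M \<rightarrow>\<^sub>M count_space UNIV"
  unfolding S_eq_sum_list_prefix[abs_def] by measurable

lemma distr_prefix: "distr M (count_space UNIV) (prefix n) = measure_pmf (proc_pmf p n)"
proof (rule measure_eqI_countable[where A=UNIV])
  fix xs :: "nat list"
  have "emeasure (distr M (count_space UNIV) (prefix n)) {xs} = emeasure M (prefix n -` {xs} \<inter> space M)"
    by (rule emeasure_distr) auto
  also have "\<dots> = emeasure (measure_pmf (proc_pmf p n)) {xs}"
  proof (cases "length xs = n")
    case True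
    then have "prefix n -` {xs} \<inter> space M = {\<omega>\<in>space M. \<forall>i<n. X (Suc i) \<omega> = xs ! i}"
      using prefix_eq_iff by auto
    with law[OF True] show ?thesis
      by (simp add: emeasure_eq_measure emeasure_pmf_single)
  next
    case False
    then have "xs \<notin> set_pmf (proc_pmf p n)"
      using set_pmf_proc_pmf unfolding binary_lists_def by blast
    moreover have "prefix n -` {xs} \<inter> space M = {}"
      using False by auto
    ultimately show ?thesis
      by (simp add: emeasure_pmf_single set_pmf_eq)
  qed
  finally show "emeasure (distr M (count_space UNIV) (prefix n)) {xs} = emeasure (measure_pmf (proc_pmf p n)) {xs}" .
qed auto

lemma integral_prefix: "(\<integral>\<omega>. F (prefix n \<omega>) \<partial>M) = proc_expectation p n (F :: nat list \<Rightarrow> real)"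
  using integral_distr[of "prefix n" M "count_space UNIV" F] by (simp add: distr_prefix)

lemma integrable_prefix: "integrable M (\<lambda>\<omega>. (F :: nat list \<Rightarrow> real) (prefix n \<omega>))"
  using integrable_distr_eq[of "prefix n" M "count_space UNIV" F]
  by (simp add: distr_prefix integrable_proc_pmf)

lemma integral_S: "(\<integral>\<omega>. g (real (S n \<omega>)) \<partial>M) = proc_expectation p n (\<lambda>xs. g (real (sum_list xs)))"
  unfolding S_eq_sum_list_prefix by (rule integral_prefix)

lemma integrable_S: "integrable M (\<lambda>\<omega>. g (real (S n \<omega>)) :: real)"
  unfolding S_eq_sum_list_prefix by (rule integrable_prefix)

lemma S_mono: "n \<le> m \<Longrightarrow> S n \<omega> \<le> S m \<omega>"
  unfolding S_def by (intro sum_mono2) auto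

lemma AE_S_ge_1: "AE \<omega> in M. \<forall>n\<ge>1. 1 \<le> S n \<omega>"
proof -
  have "prob {\<omega>\<in>space M. \<forall>i<1. X (Suc i) \<omega> = [1] ! i} = 1"
    using law[of "[1]" 1] by simp
  then have "AE \<omega> in M. X 1 \<omega> = 1"
    by (subst (asm) prob_Collect_eq_1) auto
  then show ?thesis
  proof eventually_elim
    case (elim \<omega>)
    then have "S 1 \<omega> = 1"
      by (simp add: S_def)
    then show ?case
      using S_mono[of 1 _ \<omega>] by auto
  qed
qed


lemma a_seq_p_pos: "0 < a_seq p n"
  using p_pos by (intro a_seq_pos) simp

definition M_hat :: "nat \<Rightarrow> 'a \<Rightarrow> real" where
  "M_hat n \<omega> = real (S n \<omega>) / a_seq p n"

lemma measurable_M_hat [measurable]: "M_hat n \<in> borel_measurable M"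
  unfolding M_hat_def by measurable

lemma moment_asymptotics:
  assumes "1 \<le> k"
  shows "(\<lambda>n. \<integral>\<omega>. (real (S n \<omega>) / real n powr p) ^ k \<partial>M) \<longlonglongrightarrow> fact k / Gamma (1 + real k * p)"
proof -
  obtain k' where k: "k = Suc k'"
    using assms by (cases k) auto
  have eq: "(\<integral>\<omega>. (real (S n \<omega>) / real n powr p) ^ k \<partial>M) =
      proc_expectation p n (\<lambda>xs. (real (sum_list xs) / real n powr p) ^ k)" for n
    by (rule integral_S)
  have "\<forall>\<^sub>F n in sequentially. proc_expectation p n (\<lambda>xs. real (sum_list xs) ^ k) / real n powr (real k * p)
      = (\<integral>\<omega>. (real (S n \<omega>) / real n powr p) ^ k \<partial>M)"
    using eventually_gt_at_top[of 0]
    by eventually_elim (subst eq, simp add: power_divide powr_power mult.commute)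
  with proc_moment_asymptotics[of p k'] p_pos p_less_1 show ?thesis
    unfolding k by (auto intro: Lim_transform_eventually)
qed

lemma normalized_moment_le: "(\<integral>\<omega>. \<bar>M_hat n \<omega>\<bar> ^ k \<partial>M) \<le> fact k"
proof -
  have "(\<integral>\<omega>. \<bar>M_hat n \<omega>\<bar> ^ k \<partial>M) = (\<integral>\<omega>. (real (S n \<omega>) / a_seq p n) ^ k \<partial>M)"
    using a_seq_p_pos[of n] by (simp add: M_hat_def)
  also have "\<dots> = proc_expectation p n (\<lambda>xs. (real (sum_list xs) / a_seq p n) ^ k)"
    by (rule integral_S)
  also have "\<dots> \<le> fact k"
    using p_pos p_less_1 by (intro proc_expectation_normalized_power_le) auto
  finally show ?thesis .
qed

lemma integral_M_hat_increment_squared: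
  assumes "1 \<le> n" "n \<le> m"
  shows "(\<integral>\<omega>. (M_hat m \<omega> - M_hat n \<omega>) ^ 2 \<partial>M) = second_moment_ratio p m - second_moment_ratio p n"
proof -
  let ?S = "\<lambda>xs. real (sum_list xs)" and ?T = "\<lambda>xs. real (sum_list (take n xs))"
  have p: "0 \<le> p" "p \<le> 1"
    using p_pos p_less_1 by auto
  have take: "proc_expectation p m (\<lambda>xs. g (take n xs)) = proc_expectation p n g" for g
    using integral_prefix[of "\<lambda>xs. g (take n xs)" m] integral_prefix[of g n] take_prefix[OF assms(2)]
    by simp
  define am an where "am = a_seq p m" and "an = a_seq p n"
  have "am \<noteq> 0" "an \<noteq> 0"
    using a_seq_p_pos[of m] a_seq_p_pos[of n] by (auto simp: am_def an_def)
  have "(\<integral>\<omega>. (M_hat m \<omega> - M_hat n \<omega>) ^ 2 \<partial>M) = proc_expectation p m (\<lambda>xs. (?S xs / am - ?T xs / an) ^ 2)"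
    using integral_prefix[of "\<lambda>xs. (?S xs / am - ?T xs / an) ^ 2" m] take_prefix[OF assms(2)]
    by (simp add: M_hat_def S_eq_sum_list_prefix am_def an_def)
  also have "\<dots> = proc_expectation p m (\<lambda>xs. 1 / am ^ 2 * ?S xs ^ 2
      - 2 / (am * an) * (?S xs * ?T xs) + 1 / an ^ 2 * ?T xs ^ 2)"
    using \<open>am \<noteq> 0\<close> \<open>an \<noteq> 0\<close>
    by (intro arg_cong[where f="proc_expectation p m"] ext) (simp add: power2_eq_square field_simps)
  also have "\<dots> = 1 / am ^ 2 * proc_expectation p m (\<lambda>xs. ?S xs ^ 2)
      - 2 / (am * an) * proc_expectation p m (\<lambda>xs. ?S xs * ?T xs)
      + 1 / an ^ 2 * proc_expectation p m (\<lambda>xs. ?T xs ^ 2)"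
    by (simp add: integrable_proc_pmf)
  also have "proc_expectation p m (\<lambda>xs. ?T xs ^ 2) = proc_expectation p n (\<lambda>xs. ?S xs ^ 2)"
    using take[of "\<lambda>xs. ?S xs ^ 2"] by simp
  also have "proc_expectation p m (\<lambda>xs. ?S xs * ?T xs) = am / an * proc_expectation p n (\<lambda>xs. ?S xs ^ 2)"
    unfolding am_def an_def by (rule proc_expectation_sum_list_mult_take[OF p assms])
  also have "1 / am ^ 2 * proc_expectation p m (\<lambda>xs. ?S xs ^ 2)
      - 2 / (am * an) * (am / an * proc_expectation p n (\<lambda>xs. ?S xs ^ 2))
      + 1 / an ^ 2 * proc_expectation p n (\<lambda>xs. ?S xs ^ 2)
      = second_moment_ratio p m - second_moment_ratio p n"
    using \<open>am \<noteq> 0\<close> \<open>an \<noteq> 0\<close>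
    by (simp add: second_moment_ratio_def am_def an_def field_simps power2_eq_square)
  finally show ?thesis .
qed


lemma integral_M_hat_subseq_increment_squared_le:
  assumes "6 \<le> real q * p"
  shows "(\<integral>\<omega>. (M_hat (Suc (Suc j) ^ q) \<omega> - M_hat (Suc j ^ q) \<omega>) ^ 2 \<partial>M) \<le> 2 ^ q * real (Suc j) powr (-6)"
proof -
  define x where "x = real (Suc j)"
  have "1 \<le> x"
    by (simp add: x_def)
  have le: "Suc j ^ q \<le> Suc (Suc j) ^ q"
    by (rule power_mono) simp_all
  have "(\<integral>\<omega>. (M_hat (Suc (Suc j) ^ q) \<omega> - M_hat (Suc j ^ q) \<omega>) ^ 2 \<partial>M)
      = second_moment_ratio p (Suc (Suc j) ^ q) - second_moment_ratio p (Suc j ^ q)"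
    using le by (intro integral_M_hat_increment_squared) simp_all
  also have "\<dots> \<le> real (Suc (Suc j) ^ q - Suc j ^ q) * real (Suc j ^ q) powr (- (1 + p))"
    using le p_pos p_less_1 by (intro second_moment_ratio_diff_le) simp_all
  also have "\<dots> \<le> (2 * x) ^ q * real (Suc j ^ q) powr (- (1 + p))"
  proof (rule mult_right_mono)
    have "real (Suc (Suc j) ^ q - Suc j ^ q) \<le> (x + 1) ^ q"
      by (simp add: x_def of_nat_diff[OF le])
    also have "\<dots> \<le> (2 * x) ^ q"
      using \<open>1 \<le> x\<close> by (intro power_mono) auto
    finally show "real (Suc (Suc j) ^ q - Suc j ^ q) \<le> (2 * x) ^ q" .
  qed simp
  also have "\<dots> = 2 ^ q * (x powr real q * (x powr real q) powr (- (1 + p)))"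
  proof -
    have "real (Suc j ^ q) = x ^ q" "x ^ q = x powr real q"
      using \<open>1 \<le> x\<close> by (simp_all add: x_def powr_realpow)
    then show ?thesis
      by (simp only: power_mult_distrib mult.assoc)
  qed
  also have "\<dots> = 2 ^ q * x powr (- (real q * p))"
    by (simp add: powr_powr powr_add[symmetric] algebra_simps)
  also have "\<dots> \<le> 2 ^ q * x powr (-6)"
    using assms \<open>1 \<le> x\<close> by (intro mult_left_mono powr_mono) auto
  finally show ?thesis
    by (simp add: x_def)
qed

text \<open>With \<open>q p \<ge> 6\<close>, the increments of \<open>M_hat\<close> along \<open>(j + 1)^q\<close> have second moments
  \<open>O((j + 1)^-6)\<close>.\<close>
lemma AE_convergent_M_hat_subseq:
  assumes "6 \<le> real q * p"
  shows "AE \<omega> in M. convergent (\<lambda>j. M_hat (Suc j ^ q) \<omega>)"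
proof -
  have "AE \<omega> in M. summable (\<lambda>j. M_hat (Suc (Suc j) ^ q) \<omega> - M_hat (Suc j ^ q) \<omega>)"
  proof (rule AE_summable_of_square_integral_le)
    show "integrable M (\<lambda>\<omega>. (M_hat (Suc (Suc j) ^ q) \<omega> - M_hat (Suc j ^ q) \<omega>) ^ 2)" for j
      using integrable_prefix[of "\<lambda>xs. (real (sum_list xs) / a_seq p (Suc (Suc j) ^ q) -
          real (sum_list (take (Suc j ^ q) xs)) / a_seq p (Suc j ^ q)) ^ 2" "Suc (Suc j) ^ q"]
        power_mono[of "Suc j" "Suc (Suc j)" q]
      by (simp add: M_hat_def S_eq_sum_list_prefix take_prefix)
    show "(\<integral>\<omega>. (M_hat (Suc (Suc j) ^ q) \<omega> - M_hat (Suc j ^ q) \<omega>) ^ 2 \<partial>M) \<le> 2 ^ q * real (Suc j) powr (-6)"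
      for j using assms by (rule integral_M_hat_subseq_increment_squared_le)
  qed measurable
  then show ?thesis
  proof eventually_elim
    case (elim \<omega>)
    then have "convergent (\<lambda>j. M_hat (Suc j ^ q) \<omega> - M_hat (Suc 0 ^ q) \<omega>)"
      unfolding summable_iff_convergent sum_lessThan_telescope[of "\<lambda>j. M_hat (Suc j ^ q) \<omega>"] .
    then show ?case
      by (rule convergent_diff_const_right_iff[THEN iffD1])
  qed
qed

lemma AE_M_hat_convergent: "AE \<omega> in M. convergent (\<lambda>n. M_hat n \<omega>)"
proof -
  define q where "q = nat \<lceil>6 / p\<rceil>"
  define N where "N j = Suc j ^ q" for j
  have "6 / p \<le> real q"
    unfolding q_def by linarith
  then have "6 \<le> real q * p"
    using p_pos by (simp add: field_simps)
  then have "1 \<le> q"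
    using p_less_1 by (cases q) auto
  then have "strict_mono N"
    unfolding strict_mono_def N_def by (auto intro!: power_strict_mono)
  have ratio: "(\<lambda>j. a_seq p (N (Suc j)) / a_seq p (N j)) \<longlonglongrightarrow> 1"
  proof (rule a_seq_ratio_tendsto_1)
    show "filterlim N at_top sequentially"
      using \<open>strict_mono N\<close> by (rule filterlim_subseq)
    have "(\<lambda>j. (real (Suc (Suc j)) / real (Suc j)) ^ q) \<longlonglongrightarrow> 1 ^ q"
      by (intro tendsto_power) real_asymp
    then show "(\<lambda>j. real (N (Suc j)) / real (N j)) \<longlonglongrightarrow> 1"
      by (simp add: N_def power_divide)
  qed (use p_pos in simp)
  have "mono (a_seq p)"
    using p_pos by (intro monoI a_seq_mono) auto
  from AE_convergent_M_hat_subseq[OF \<open>6 \<le> real q * p\<close>] show ?thesis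
  proof eventually_elim
    case (elim \<omega>)
    then obtain L where lim: "(\<lambda>j. real (S (N j) \<omega>) / a_seq p (N j)) \<longlonglongrightarrow> L"
      by (auto simp: convergent_def M_hat_def N_def)
    have "mono (\<lambda>n. real (S n \<omega>))"
      by (intro monoI) (simp add: S_mono)
    from LIMSEQ_of_monotone_subseq[OF this _ \<open>mono (a_seq p)\<close> a_seq_p_pos \<open>strict_mono N\<close> lim ratio]
    have "(\<lambda>n. real (S n \<omega>) / a_seq p n) \<longlonglongrightarrow> L"
      by simp
    then show ?case
      by (auto simp: convergent_def M_hat_def)
  qed
qed


text \<open>The \<open>max 0\<close> only matters off the almost-sure convergence set; it makes \<open>W\<close> nonnegative everywhere.\<close>
definition hat_W :: "'a \<Rightarrow> real" where
  "hat_W \<omega> = max 0 (lim (\<lambda>n. M_hat n \<omega>))"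

definition W :: "'a \<Rightarrow> real" where
  "W \<omega> = hat_W \<omega> / Gamma (1 + p)"

lemma measurable_hat_W [measurable]: "hat_W \<in> borel_measurable M"
  unfolding hat_W_def by measurable

lemma measurable_W [measurable]: "W \<in> borel_measurable M"
  unfolding W_def by measurable

lemma W_nonneg: "0 \<le> W \<omega>"
  using p_pos by (simp add: W_def hat_W_def)

lemma AE_M_hat_tendsto_hat_W: "AE \<omega> in M. (\<lambda>n. M_hat n \<omega>) \<longlonglongrightarrow> hat_W \<omega>"
  using AE_M_hat_convergent
proof eventually_elim
  case (elim \<omega>)
  then have lim: "(\<lambda>n. M_hat n \<omega>) \<longlonglongrightarrow> lim (\<lambda>n. M_hat n \<omega>)"
    by (simp add: convergent_LIMSEQ_iff)
  moreover have "0 \<le> M_hat n \<omega>" for n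
    using a_seq_p_pos[of n] by (simp add: M_hat_def)
  then have "0 \<le> lim (\<lambda>n. M_hat n \<omega>)"
    using LIMSEQ_le_const[OF lim] by blast
  ultimately show ?case
    by (simp add: hat_W_def)
qed

lemma AE_tendsto_W: "AE \<omega> in M. (\<lambda>n. real (S n \<omega>) / real n powr p) \<longlonglongrightarrow> W \<omega>"
  using AE_M_hat_tendsto_hat_W
proof eventually_elim
  case (elim \<omega>)
  have "(\<lambda>n. M_hat n \<omega> * (a_seq p n / real n powr p)) \<longlonglongrightarrow> hat_W \<omega> * (1 / Gamma (1 + p))"
    using p_pos by (intro tendsto_mult elim a_seq_asymptotics) simp
  moreover have "(\<lambda>n. M_hat n \<omega> * (a_seq p n / real n powr p)) = (\<lambda>n. real (S n \<omega>) / real n powr p)"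
    using a_seq_p_pos by (intro ext) (simp add: M_hat_def less_imp_neq[symmetric])
  ultimately show ?case
    by (simp add: W_def)
qed

lemma W_moment:
  "integrable M (\<lambda>\<omega>. W \<omega> ^ k) \<and> (\<integral>\<omega>. W \<omega> ^ k \<partial>M) = fact k / Gamma (1 + real k * p)"
proof (cases "k = 0")
  case False
  let ?f = "\<lambda>n \<omega>. (real (S n \<omega>) / real n powr p) ^ k"
  have "convergent (\<lambda>n. \<integral>\<omega>. (real (S n \<omega>) / real n powr p) ^ (2 * k) \<partial>M)"
    using moment_asymptotics[of "2 * k"] False by (auto simp: convergent_def)
  then have "Bseq (\<lambda>n. \<integral>\<omega>. (real (S n \<omega>) / real n powr p) ^ (2 * k) \<partial>M)"
    by (rule convergent_imp_Bseq)
  then obtain B where B: "\<And>n. norm (\<integral>\<omega>. (real (S n \<omega>) / real n powr p) ^ (2 * k) \<partial>M) \<le> B"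
    unfolding Bseq_def by auto
  have lim: "AE \<omega> in M. (\<lambda>n. ?f n \<omega>) \<longlonglongrightarrow> W \<omega> ^ k"
    using AE_tendsto_W by eventually_elim (rule tendsto_power)
  have bound: "(\<integral>\<omega>. (?f n \<omega>)\<^sup>2 \<partial>M) \<le> B" for n
    using B[of n] by (simp add: power_mult[symmetric] mult.commute)
  have int: "integrable M (\<lambda>\<omega>. (?f n \<omega>)\<^sup>2)" for n
    by (rule integrable_S)
  have meas: "?f n \<in> borel_measurable M" "(\<lambda>\<omega>. W \<omega> ^ k) \<in> borel_measurable M" for n
    by measurable
  have "0 \<le> ?f n \<omega>" for n \<omega>
    by simp
  note square_bounded = integral_tendsto_of_square_bounded[OF meas lim this int bound]
  have "(\<integral>\<omega>. W \<omega> ^ k \<partial>M) = fact k / Gamma (1 + real k * p)"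
    using False by (intro LIMSEQ_unique[OF square_bounded(2) moment_asymptotics]) simp
  with square_bounded(1) show ?thesis
    by simp
qed (simp add: prob_space)

text \<open>Termwise integration of the exponential series, justified by the summability of the absolute
  moments \<open>\<bar>l\<bar>^k / Gamma (1 + k p)\<close>.\<close>
lemma W_exp_moments:
  shows "integrable M (\<lambda>\<omega>. exp (l * W \<omega>))"
    and "(\<lambda>k. l ^ k / Gamma (1 + real k * p)) sums (\<integral>\<omega>. exp (l * W \<omega>) \<partial>M)"
proof -
  define f where "f k \<omega> = (l * W \<omega>) ^ k / fact k" for k \<omega>
  have int: "integrable M (f k)" for k
    unfolding f_def power_mult_distrib using W_moment[of k] by simp
  have integral_f: "integral\<^sup>L M (f k) = l ^ k / Gamma (1 + real k * p)" for k
    unfolding f_def power_mult_distrib using W_moment[of k] by simp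
  have summable_norm: "AE \<omega> in M. summable (\<lambda>k. norm (f k \<omega>))"
    using summable_exp[of "\<bar>l * W \<omega>\<bar>" for \<omega>]
    by (intro AE_I2) (simp add: f_def abs_mult power_abs divide_inverse mult.commute)
  have summable_integral: "summable (\<lambda>k. \<integral>\<omega>. norm (f k \<omega>) \<partial>M)"
  proof -
    have "(\<lambda>\<omega>. norm (f k \<omega>)) = (\<lambda>\<omega>. \<bar>l\<bar> ^ k / fact k * W \<omega> ^ k)" for k
      unfolding f_def using W_nonneg by (auto simp: power_abs abs_mult power_mult_distrib)
    then show ?thesis
      using summable_power_div_Gamma[OF p_pos, of "\<bar>l\<bar>"] W_moment by simp
  qed
  have "(\<Sum>k. f k \<omega>) = exp (l * W \<omega>)" for \<omega>
    using exp_converges[of "l * W \<omega>"]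
    by (simp add: f_def sums_iff scaleR_conv_of_real divide_inverse mult.commute)
  then show "integrable M (\<lambda>\<omega>. exp (l * W \<omega>))"
    and "(\<lambda>k. l ^ k / Gamma (1 + real k * p)) sums (\<integral>\<omega>. exp (l * W \<omega>) \<partial>M)"
    using integrable_suminf[OF int summable_norm summable_integral]
      sums_integral[OF int summable_norm summable_integral]
    by (simp_all add: integral_f)
qed


text \<open>\<open>Z n\<close> has bounded mean but tends to infinity wherever \<open>W = 0\<close>; this rules out \<open>W = 0\<close>.\<close>
definition Z :: "nat \<Rightarrow> 'a \<Rightarrow> real" where
  "Z n \<omega> = real n powr (p / 2) * a_seq (- (1 / 2)) (S n \<omega>)"

lemma measurable_Z [measurable]: "Z n \<in> borel_measurable M"
  unfolding Z_def by measurable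

lemma Z_nonneg: "0 \<le> Z n \<omega>"
  unfolding Z_def using a_seq_pos[of "- (1 / 2)" "S n \<omega>"] by simp

lemma integral_Z_bounded: obtains C where "\<And>n. 1 \<le> n \<Longrightarrow> (\<integral>\<omega>. Z n \<omega> \<partial>M) \<le> C"
proof -
  have gt: "-1 < - (p / 2)"
    using p_less_1 by simp
  obtain c C where "0 < c" "\<And>n. 1 \<le> n \<Longrightarrow> c * real n powr (- (p / 2)) \<le> a_seq (- (p / 2)) n"
    and C: "\<And>n. 1 \<le> n \<Longrightarrow> a_seq (- (p / 2)) n \<le> C * real n powr (- (p / 2))"
    using a_seq_comparable_powr[OF gt] by blast
  have "(\<integral>\<omega>. Z n \<omega> \<partial>M) \<le> C" if "1 \<le> n" for n
  proof -
    have "(\<integral>\<omega>. Z n \<omega> \<partial>M) = real n powr (p / 2) * proc_expectation p n (\<lambda>xs. a_seq (- (1 / 2)) (sum_list xs))"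
      using integral_prefix[of "\<lambda>xs. a_seq (- (1 / 2)) (sum_list xs)" n] by (simp add: Z_def S_eq_sum_list_prefix)
    also have "\<dots> = real n powr (p / 2) * a_seq (- (p / 2)) n"
      using p_pos p_less_1 that by (subst proc_expectation_a_seq_sum_list) auto
    also have "\<dots> \<le> real n powr (p / 2) * (C * real n powr (- (p / 2)))"
      using C[OF that] by (intro mult_left_mono) auto
    also have "\<dots> = C"
      using that by (simp add: powr_minus field_simps)
    finally show ?thesis .
  qed
  then show ?thesis
    using that by blast
qed

lemma Z_lower_bound:
  obtains c where "0 < c" "\<And>n \<omega>. 1 \<le> S n \<omega> \<Longrightarrow> c / sqrt (real (S n \<omega>) / real n powr p) \<le> Z n \<omega>"
proof -
  have gt: "-1 < - (1 / 2 :: real)"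
    by simp
  obtain c C where "0 < c" and c: "\<And>m. 1 \<le> m \<Longrightarrow> c * real m powr (- (1 / 2)) \<le> a_seq (- (1 / 2)) m"
    and "\<And>m. 1 \<le> m \<Longrightarrow> a_seq (- (1 / 2)) m \<le> C * real m powr (- (1 / 2))"
    using a_seq_comparable_powr[OF gt] by blast
  have "c / sqrt (real (S n \<omega>) / real n powr p) \<le> Z n \<omega>" if "1 \<le> S n \<omega>" for n \<omega>
  proof -
    define s where "s = real (S n \<omega>)"
    have "0 < s"
      using that by (simp add: s_def)
    have "c / sqrt (s / real n powr p) = real n powr (p / 2) * (c * s powr (- (1 / 2)))"
    proof (cases "n = 0")
      case False
      have "sqrt (s / real n powr p) = s powr (1 / 2) / real n powr (p / 2)"
        using \<open>0 < s\<close> by (simp add: real_sqrt_divide powr_half_sqrt[symmetric] powr_powr)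
      then show ?thesis
        using \<open>0 < s\<close> False by (simp add: powr_minus field_simps)
    qed simp
    also have "\<dots> \<le> Z n \<omega>"
      unfolding Z_def s_def using c[OF that] by (intro mult_left_mono) auto
    finally show ?thesis
      by (simp add: s_def)
  qed
  with \<open>0 < c\<close> that show ?thesis
    by blast
qed

lemma AE_liminf_Z_finite: "AE \<omega> in M. liminf (\<lambda>n. ennreal (Z n \<omega>)) \<noteq> \<infinity>"
proof -
  obtain C where C: "\<And>n. 1 \<le> n \<Longrightarrow> (\<integral>\<omega>. Z n \<omega> \<partial>M) \<le> C"
    using integral_Z_bounded by blast
  have "(\<integral>\<^sup>+\<omega>. liminf (\<lambda>n. ennreal (Z n \<omega>)) \<partial>M) \<le> liminf (\<lambda>n. \<integral>\<^sup>+\<omega>. ennreal (Z n \<omega>) \<partial>M)"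
    by (rule nn_integral_liminf) measurable
  also have "\<dots> \<le> ennreal C"
  proof (rule Liminf_le)
    show "\<forall>\<^sub>F n in sequentially. (\<integral>\<^sup>+\<omega>. ennreal (Z n \<omega>) \<partial>M) \<le> ennreal C"
      using eventually_ge_at_top[of 1]
    proof eventually_elim
      case (elim n)
      have "integrable M (Z n)"
        unfolding Z_def[abs_def] S_eq_sum_list_prefix by (rule integrable_prefix)
      then have "(\<integral>\<^sup>+\<omega>. ennreal (Z n \<omega>) \<partial>M) = ennreal (\<integral>\<omega>. Z n \<omega> \<partial>M)"
        by (intro nn_integral_eq_integral) (simp_all add: Z_nonneg)
      with C[OF elim] show ?case
        by (simp add: ennreal_leI)
    qed
  qed simp
  finally have le: "(\<integral>\<^sup>+\<omega>. liminf (\<lambda>n. ennreal (Z n \<omega>)) \<partial>M) \<le> ennreal C" .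
  have "(\<integral>\<^sup>+\<omega>. liminf (\<lambda>n. ennreal (Z n \<omega>)) \<partial>M) \<noteq> \<infinity>"
    using neq_top_trans[OF ennreal_neq_top le] by simp
  then show ?thesis
    by (intro nn_integral_PInf_AE borel_measurable_liminf) measurable
qed

lemma Z_tendsto_at_top:
  assumes S_ge_1: "\<forall>n\<ge>1. 1 \<le> S n \<omega>" and lim: "(\<lambda>n. real (S n \<omega>) / real n powr p) \<longlonglongrightarrow> 0"
  shows "filterlim (\<lambda>n. Z n \<omega>) at_top sequentially"
proof -
  obtain c where "0 < c"
    and c: "\<And>n \<omega>. 1 \<le> S n \<omega> \<Longrightarrow> c / sqrt (real (S n \<omega>) / real n powr p) \<le> Z n \<omega>"
    using Z_lower_bound by blast
  define u where "u n = real (S n \<omega>) / real n powr p" for n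
  have u_pos: "0 < u n" if "1 \<le> n" for n
  proof -
    have "0 < real (S n \<omega>)"
      using S_ge_1[rule_format, OF that] by simp
    then show ?thesis
      using that by (simp add: u_def)
  qed
  have "u \<longlonglongrightarrow> 0"
    using lim by (simp add: u_def[abs_def])
  from tendsto_real_sqrt[OF this] have "(\<lambda>n. sqrt (u n)) \<longlonglongrightarrow> 0"
    by simp
  moreover have "\<forall>\<^sub>F n in sequentially. 0 < sqrt (u n)"
    using eventually_ge_at_top[of 1] by eventually_elim (simp add: u_pos)
  ultimately have "filterlim (\<lambda>n. c * inverse (sqrt (u n))) at_top sequentially"
    by (intro filterlim_tendsto_pos_mult_at_top[OF tendsto_const \<open>0 < c\<close>] filterlim_inverse_at_top)
  moreover have "\<forall>\<^sub>F n in sequentially. c * inverse (sqrt (u n)) \<le> Z n \<omega>"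
    using eventually_ge_at_top[of 1]
  proof eventually_elim
    case (elim n)
    with S_ge_1 have "c / sqrt (u n) \<le> Z n \<omega>"
      unfolding u_def by (intro c) simp
    then show ?case
      by (simp add: divide_inverse)
  qed
  ultimately show ?thesis
    by (rule filterlim_at_top_mono)
qed

lemma W_pos: "prob {\<omega>\<in>space M. 0 < W \<omega>} = 1"
proof -
  have "AE \<omega> in M. 0 < W \<omega>"
    using AE_tendsto_W AE_S_ge_1 AE_liminf_Z_finite
  proof eventually_elim
    case (elim \<omega>)
    show ?case
    proof (rule ccontr)
      assume "\<not> 0 < W \<omega>"
      then have "(\<lambda>n. real (S n \<omega>) / real n powr p) \<longlonglongrightarrow> 0"
        using elim(1) W_nonneg[of \<omega>] by simp
      from Z_tendsto_at_top[OF elim(2) this]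
      have "(\<lambda>n. ennreal (Z n \<omega>)) \<longlonglongrightarrow> top"
        by (rule ennreal_tendsto_top_eq_at_top[THEN iffD2])
      then have "liminf (\<lambda>n. ennreal (Z n \<omega>)) = top"
        by (rule lim_imp_Liminf[OF trivial_limit_sequentially])
      with elim(3) show False
        by simp
    qed
  qed
  then show ?thesis
    by (subst prob_Collect_eq_1) simp_all
qed

end

theorem corollary2p2:
  fixes M :: "'a measure" and X :: "nat \<Rightarrow> 'a \<Rightarrow> nat" and p :: real
  assumes "prob_space M"
    and "0 < p" and "p < 1"
    and meas: "\<And>i. X i \<in> M \<rightarrow>\<^sub>M count_space UNIV"
    and law: "\<And>n xs. length xs = n \<Longrightarrow>
               measure M {\<omega>\<in>space M. \<forall>i<n. X (Suc i) \<omega> = xs ! i} = pmf (proc_pmf p n) xs"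
  defines "H \<equiv> (\<lambda>n \<omega>. \<Sum>i=1..n. real (X i \<omega>))"
  shows "(\<forall>k::nat. k \<ge> 1 \<longrightarrow>
           (\<lambda>n. integral\<^sup>L M (\<lambda>\<omega>. (H n \<omega> / real n powr p) ^ k))
             \<longlonglongrightarrow> fact k / Gamma (1 + real k * p))
       \<and> (\<forall>k::nat. k \<ge> 1 \<longrightarrow>
           (\<exists>C. \<forall>n. integral\<^sup>L M (\<lambda>\<omega>. \<bar>H n \<omega> / a_seq p n\<bar> ^ k) \<le> C))
       \<and> (\<exists>W hatW. W \<in> borel_measurable M \<and> hatW \<in> borel_measurable M
           \<and> (AE \<omega> in M. (\<lambda>n. H n \<omega> / a_seq p n) \<longlonglongrightarrow> hatW \<omega>)
           \<and> (AE \<omega> in M. (\<lambda>n. H n \<omega> / real n powr p) \<longlonglongrightarrow> W \<omega>)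
           \<and> (AE \<omega> in M. W \<omega> = hatW \<omega> / Gamma (1 + p))
           \<and> mittag_leffler_distributed M p W
           \<and> measure M {\<omega>\<in>space M. W \<omega> > 0} = 1)"
proof -
  interpret proc_realization M X p
    using assms by (intro proc_realization.intro proc_realization_axioms.intro) auto
  have H_eq: "H = (\<lambda>n \<omega>. real (S n \<omega>))"
    by (simp add: H_def S_def)
  have "mittag_leffler_distributed M p W"
    unfolding mittag_leffler_distributed_def using W_exp_moments by simp
  then show ?thesis
    unfolding H_eq M_hat_def[symmetric]
    using moment_asymptotics normalized_moment_le AE_M_hat_tendsto_hat_W AE_tendsto_W W_pos
    by (intro conjI allI impI exI[of _ W] exI[of _ hat_W]) (auto simp: W_def)
qed

end
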